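(* There is an absolute constant $c>0$ such that the following holds. For every $\varepsilon>0$ there is $n_0=n_0(\varepsilon)$ such that for every $n\ge n_0$ and every $d$-regular $n$-vertex graph $F$ with $d\le(1-\varepsilon)n$, every 2-coloring $f:E(K_n)\to\{\pm1\}$ admits a copy of $F$ in $K_n$ with discrepancy at least $c\sqrt{\varepsilon d}\,n$.
   Context: For a coloring $f:E(K_n)\to\{\pm1\}$ and a subgraph $F_0\subseteq K_n$, the discrepancy of $F_0$ is $\left|\sum_{e\in E(F_0)}f(e)\right|$. A copy of $F$ in $K_n$ is a subgraph of $K_n$ isomorphic to $F$. *)

theory Defs
  imports Complex_Main
begin

definition Kn_edges :: "nat \<Rightarrow> nat set set" where
  "Kn_edges n = {e. e \<subseteq> {..<n} \<and> card e = 2}"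

definition graph_on :: "nat \<Rightarrow> nat set set \<Rightarrow> bool" where
  "graph_on n F \<longleftrightarrow> F \<subseteq> Kn_edges n"

definition degree :: "nat set set \<Rightarrow> nat \<Rightarrow> nat" where
  "degree F v = card {e \<in> F. v \<in> e}"

definition regular :: "nat \<Rightarrow> nat set set \<Rightarrow> nat \<Rightarrow> bool" where
  "regular n F d \<longleftrightarrow> (\<forall>v<n. degree F v = d)"

text \<open>Copies of an n-vertex graph F in K_n: subgraphs H of K_n isomorphic to F.
  Since F spans all n vertices, these are exactly the images of F under
  permutations of the vertex set.\<close>
definition is_copy :: "nat \<Rightarrow> nat set set \<Rightarrow> nat set set \<Rightarrow> bool" where
  "is_copy n F H \<longleftrightarrow> (\<exists>\<sigma>. bij_betw \<sigma> {..<n} {..<n} \<and> H = (\<lambda>e. \<sigma> ` e) ` F)"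

definition discrepancy :: "(nat set \<Rightarrow> int) \<Rightarrow> nat set set \<Rightarrow> int" where
  "discrepancy f H = \<bar>\<Sum>e\<in>H. f e\<bar>"

end

theory Submission
  imports Defs "HOL-Combinatorics.Permutations"
begin

(* If the colouring f is far from balanced, a uniformly random copy of F already has
   discrepancy of order d n.  Otherwise f has order n^4 alternating 4-tuples (a, b, c, e),
   i.e. f{a,c} - f{b,c} - f{a,e} + f{b,e} \<noteq> 0, and a d-regular F with d \<le> (1 - \<epsilon>) n has
   order n^2 d (n - d) of them.  Split n/2 vertices into pairs and n/2 into couples.
   Swapping the vertices of some pairs changes the colour sum of a copy by a quadratic
   function of the swap pattern whose linear part is attained up to sign, and the size of
   that linear part, averaged over swaps of the couples, is bounded below by a fourth-moment
   (Khintchine) inequality in terms of the alternating 4-tuples meeting a pair and a couple.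
   Averaging over random relabellings of f and F then gives the bound c sqrt(\<epsilon> d) n. *)

section \<open>Permutations acting on distinct lists\<close>

definition distinct_lists :: "nat \<Rightarrow> 'a set \<Rightarrow> 'a list set" where
  "distinct_lists k U = {xs. length xs = k \<and> distinct xs \<and> set xs \<subseteq> U}"

lemma finite_distinct_lists: "finite U \<Longrightarrow> finite (distinct_lists k U)"
  unfolding distinct_lists_def
  by (rule finite_subset[OF _ finite_lists_length_eq[of U k]]) auto

lemma distinct_lists_0: "distinct_lists 0 U = {[]}"
  by (auto simp: distinct_lists_def)

lemma distinct_lists_Suc:
  "distinct_lists (Suc k) U = (\<lambda>(a, ys). a # ys) ` (SIGMA a:U. distinct_lists k (U - {a}))"
  unfolding distinct_lists_def by (auto simp: length_Suc_conv image_iff)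

lemma sum_distinct_lists_Suc:
  fixes G :: "'a list \<Rightarrow> real"
  assumes "finite U"
  shows "(\<Sum>ys\<in>distinct_lists (Suc k) U. G ys) = (\<Sum>a\<in>U. \<Sum>ys\<in>distinct_lists k (U - {a}). G (a # ys))"
proof -
  have inj: "inj_on (\<lambda>(a, ys). a # ys) (SIGMA a:U. distinct_lists k (U - {a}))"
    by (auto simp: inj_on_def)
  have "(\<Sum>ys\<in>distinct_lists (Suc k) U. G ys) = (\<Sum>(a, ys)\<in>(SIGMA a:U. distinct_lists k (U - {a})). G (a # ys))"
    unfolding distinct_lists_Suc sum.reindex[OF inj] by (simp add: case_prod_beta)
  also have "\<dots> = (\<Sum>a\<in>U. \<Sum>ys\<in>distinct_lists k (U - {a}). G (a # ys))"
    by (rule sum.Sigma[symmetric]) (use assms in \<open>auto simp: finite_distinct_lists\<close>)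
  finally show ?thesis .
qed

lemma sum_distinct_lists_2:
  fixes G :: "'a list \<Rightarrow> real"
  assumes "finite U"
  shows "(\<Sum>ys\<in>distinct_lists 2 U. G ys) = (\<Sum>a\<in>U. \<Sum>b\<in>U-{a}. G [a, b])"
  using assms by (simp add: numeral_eq_Suc sum_distinct_lists_Suc distinct_lists_0)

lemma sum_distinct_lists_4:
  fixes G :: "'a list \<Rightarrow> real"
  assumes "finite U"
  shows "(\<Sum>ys\<in>distinct_lists 4 U. G ys)
       = (\<Sum>a\<in>U. \<Sum>b\<in>U-{a}. \<Sum>c\<in>U-{a}-{b}. \<Sum>e\<in>U-{a}-{b}-{c}. G [a, b, c, e])"
  using assms by (simp add: numeral_eq_Suc sum_distinct_lists_Suc distinct_lists_0)

lemma exists_permutes_map_eq: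
  assumes "finite U"
  shows "distinct xs \<Longrightarrow> distinct ys \<Longrightarrow> length xs = length ys \<Longrightarrow> set xs \<subseteq> U \<Longrightarrow> set ys \<subseteq> U
    \<Longrightarrow> \<exists>\<tau>. \<tau> permutes U \<and> map \<tau> xs = ys"
proof (induction xs arbitrary: ys)
  case Nil
  then show ?case using permutes_id by fastforce
next
  case (Cons x xs)
  then obtain y ys' where ys: "ys = y # ys'" by (cases ys) auto
  from Cons.prems ys obtain \<tau>' where \<tau>': "\<tau>' permutes U" "map \<tau>' xs = ys'"
    using Cons.IH[of ys'] by auto
  define \<tau> where "\<tau> = transpose (\<tau>' x) y \<circ> \<tau>'"
  have xy: "x \<in> U" "y \<in> U" using Cons.prems ys by auto
  then have "\<tau>' x \<in> U" using \<tau>'(1) by (simp add: permutes_in_image)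
  then have \<tau>: "\<tau> permutes U" unfolding \<tau>_def
    by (intro permutes_compose \<tau>'(1) permutes_swap_id) (use xy in auto)
  have "\<tau> z = \<tau>' z" if "z \<in> set xs" for z
  proof -
    have "\<tau>' z \<noteq> y" using \<tau>'(2) that Cons.prems ys by auto
    moreover have "\<tau>' z \<noteq> \<tau>' x" using that Cons.prems permutes_inj[OF \<tau>'(1)]
      by (auto dest: injD)
    ultimately show ?thesis unfolding \<tau>_def by (simp add: transpose_def)
  qed
  then have "map \<tau> xs = ys'" using \<tau>'(2) by (metis map_cong)
  moreover have "\<tau> x = y" unfolding \<tau>_def by simp
  ultimately show ?case using \<tau> ys by (intro exI[of _ \<tau>]) auto
qed

lemma card_permutes_fixing_list:
  assumes "finite U" "set xs \<subseteq> U" "distinct xs"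
  shows "card {\<pi>. \<pi> permutes U \<and> map \<pi> xs = xs} = fact (card U - length xs)"
proof -
  have "{\<pi>. \<pi> permutes U \<and> map \<pi> xs = xs} = {\<pi>. \<pi> permutes (U - set xs)}"
  proof (intro set_eqI iffI)
    fix \<pi> assume "\<pi> \<in> {\<pi>. \<pi> permutes U \<and> map \<pi> xs = xs}"
    then have \<pi>: "\<pi> permutes U" "map \<pi> xs = map id xs" by auto
    then have "\<forall>z\<in>set xs. \<pi> z = z" by (simp only: map_eq_conv) simp
    then show "\<pi> \<in> {\<pi>. \<pi> permutes (U - set xs)}"
      using \<pi>(1) by (auto simp: permutes_def)
  next
    fix \<pi> assume "\<pi> \<in> {\<pi>. \<pi> permutes (U - set xs)}"
    then have \<pi>: "\<pi> permutes U - set xs" by simp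
    then have "\<pi> permutes U" by (rule permutes_subset) auto
    moreover have "map \<pi> xs = xs" using \<pi> by (auto simp: permutes_not_in intro: map_idI)
    ultimately show "\<pi> \<in> {\<pi>. \<pi> permutes U \<and> map \<pi> xs = xs}" by simp
  qed
  moreover have "card (U - set xs) = card U - length xs"
    using assms by (simp add: card_Diff_subset distinct_card)
  ultimately show ?thesis using card_permutations[of "U - set xs"] assms by simp
qed

lemma card_permutes_map_eq:
  assumes "finite U" "ys \<in> distinct_lists (length xs) U" "set xs \<subseteq> U" "distinct xs"
  shows "card {\<beta>. \<beta> permutes U \<and> map \<beta> xs = ys} = fact (card U - length xs)"
proof -
  obtain \<tau> where \<tau>: "\<tau> permutes U" "map \<tau> xs = ys"
    using exists_permutes_map_eq[OF assms(1) assms(4), of ys] assms by (auto simp: distinct_lists_def)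
  have coset: "{\<beta>. \<beta> permutes U \<and> map \<beta> xs = ys} = (\<lambda>\<pi>. \<tau> \<circ> \<pi>) ` {\<pi>. \<pi> permutes U \<and> map \<pi> xs = xs}"
  proof (intro set_eqI iffI)
    fix \<beta> assume "\<beta> \<in> {\<beta>. \<beta> permutes U \<and> map \<beta> xs = ys}"
    then have \<beta>: "\<beta> permutes U" "map \<beta> xs = ys" by auto
    have "inv \<tau> \<circ> \<beta> permutes U" by (intro permutes_compose \<beta>(1) permutes_inv \<tau>(1))
    moreover have "map (inv \<tau> \<circ> \<beta>) xs = xs"
      using \<beta>(2) \<tau>(2) permutes_inv_o(2)[OF \<tau>(1)] by (metis list.map_comp list.map_id)
    moreover have "\<beta> = \<tau> \<circ> (inv \<tau> \<circ> \<beta>)"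
      using permutes_inverses(1)[OF \<tau>(1)] by (auto simp: fun_eq_iff)
    ultimately show "\<beta> \<in> (\<lambda>\<pi>. \<tau> \<circ> \<pi>) ` {\<pi>. \<pi> permutes U \<and> map \<pi> xs = xs}" by blast
  next
    fix \<beta> assume "\<beta> \<in> (\<lambda>\<pi>. \<tau> \<circ> \<pi>) ` {\<pi>. \<pi> permutes U \<and> map \<pi> xs = xs}"
    then show "\<beta> \<in> {\<beta>. \<beta> permutes U \<and> map \<beta> xs = ys}"
      using \<tau> by (auto intro: permutes_compose simp: map_map[symmetric])
  qed
  have inj: "inj_on (\<lambda>\<pi>. \<tau> \<circ> \<pi>) {\<pi>. \<pi> permutes U \<and> map \<pi> xs = xs}"
    using permutes_inj[OF \<tau>(1)] by (auto simp: inj_on_def fun_eq_iff dest: injD)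
  show ?thesis
    unfolding coset card_image[OF inj] by (rule card_permutes_fixing_list[OF assms(1,3,4)])
qed

lemma sum_permutes_map_list:
  fixes G :: "'a list \<Rightarrow> real"
  assumes "finite U" "set xs \<subseteq> U" "distinct xs"
  shows "(\<Sum>\<beta>\<in>{\<beta>. \<beta> permutes U}. G (map \<beta> xs))
       = fact (card U - length xs) * (\<Sum>ys\<in>distinct_lists (length xs) U. G ys)"
proof -
  have img: "(\<lambda>\<beta>. map \<beta> xs) ` {\<beta>. \<beta> permutes U} \<subseteq> distinct_lists (length xs) U"
    using assms(2,3) permutes_in_image
    by (fastforce simp: distinct_lists_def distinct_map permutes_inj_on)
  have "(\<Sum>\<beta>\<in>{\<beta>. \<beta> permutes U}. G (map \<beta> xs))
      = (\<Sum>ys\<in>distinct_lists (length xs) U. \<Sum>\<beta>\<in>{\<beta>\<in>{\<beta>. \<beta> permutes U}. map \<beta> xs = ys}. G (map \<beta> xs))"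
    by (rule sum.group[symmetric, OF finite_permutations[OF assms(1)] finite_distinct_lists[OF assms(1)] img])
  also have "\<dots> = (\<Sum>ys\<in>distinct_lists (length xs) U. \<Sum>\<beta>\<in>{\<beta>. \<beta> permutes U \<and> map \<beta> xs = ys}. G ys)"
    by (intro sum.cong) auto
  also have "\<dots> = (\<Sum>ys\<in>distinct_lists (length xs) U. fact (card U - length xs) * G ys)"
    by (intro sum.cong refl) (simp add: card_permutes_map_eq assms)
  finally show ?thesis by (simp add: sum_distrib_left)
qed

section \<open>Graphs on the vertex set of K_n\<close>

definition adj :: "nat set set \<Rightarrow> nat \<Rightarrow> nat \<Rightarrow> real" where
  "adj F x y = (if {x, y} \<in> F then 1 else 0)"

lemma adj_sym: "adj F x y = adj F y x"
  by (simp add: adj_def insert_commute)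

lemma adj_0_or_1: "adj F x y = 0 \<or> adj F x y = 1"
  by (simp add: adj_def)

lemma graph_on_finite: "graph_on n F \<Longrightarrow> finite F"
  unfolding graph_on_def Kn_edges_def by (rule finite_subset[of _ "Pow {..<n}"]) auto

lemma graph_on_edgeE:
  assumes "graph_on n F" "e \<in> F"
  obtains a b where "e = {a, b}" "a \<noteq> b" "a < n" "b < n"
  using assms by (auto simp: graph_on_def Kn_edges_def card_2_iff)

lemma adj_self: "graph_on n F \<Longrightarrow> adj F x x = 0"
  by (auto simp: adj_def elim: graph_on_edgeE)

lemma adj_Kn_edges: "adj (Kn_edges n) a b = (if a < n \<and> b < n \<and> a \<noteq> b then 1 else 0)"
  by (auto simp: adj_def Kn_edges_def card_insert_if)

lemma sum_edges_eq_sum_adj: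
  fixes h :: "nat set \<Rightarrow> real"
  assumes G: "graph_on n F"
  shows "2 * (\<Sum>e\<in>F. h e) = (\<Sum>u<n. \<Sum>v<n. adj F u v * h {u, v})"
proof -
  define P where "P = {p \<in> {..<n} \<times> {..<n}. {fst p, snd p} \<in> F}"
  have "(\<Sum>u<n. \<Sum>v<n. adj F u v * h {u, v})
      = (\<Sum>p\<in>{..<n} \<times> {..<n}. if {fst p, snd p} \<in> F then h {fst p, snd p} else 0)"
    by (simp add: sum.cartesian_product case_prod_beta) (intro sum.cong refl, simp add: adj_def)
  also have "\<dots> = (\<Sum>p\<in>P. h {fst p, snd p})"
    unfolding P_def by (rule sum.inter_filter[symmetric]) auto
  also have "\<dots> = (\<Sum>e\<in>F. \<Sum>p\<in>{p\<in>P. {fst p, snd p} = e}. h {fst p, snd p})"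
    by (rule sum.group[symmetric]) (auto simp: P_def graph_on_finite[OF G])
  also have "\<dots> = (\<Sum>e\<in>F. 2 * h e)"
  proof (rule sum.cong[OF refl])
    fix e assume e: "e \<in> F"
    then obtain a b where ab: "e = {a, b}" "a \<noteq> b" "a < n" "b < n"
      using G by (auto elim: graph_on_edgeE)
    then have "{p\<in>P. {fst p, snd p} = e} = {(a, b), (b, a)}"
      using e by (auto simp: P_def doubleton_eq_iff insert_commute)
    then show "(\<Sum>p\<in>{p\<in>P. {fst p, snd p} = e}. h {fst p, snd p}) = 2 * h e"
      using ab by (simp add: insert_commute)
  qed
  finally show ?thesis by (simp add: sum_distrib_left)
qed

lemma sum_adj_eq_degree:
  assumes G: "graph_on n F" and v: "v < n"
  shows "(\<Sum>u<n. adj F v u) = real (degree F v)"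
proof -
  have "(\<Sum>u<n. adj F v u) = real (card {u\<in>{..<n}. {v, u} \<in> F})"
    by (simp add: adj_def sum.If_cases Int_def conj_commute)
  also have "card {u\<in>{..<n}. {v, u} \<in> F} = card {e\<in>F. v \<in> e}"
  proof (rule bij_betw_same_card[of "\<lambda>u. {v, u}"], rule bij_betwI')
    fix e assume "e \<in> {e\<in>F. v \<in> e}"
    then obtain a b where "e \<in> F" "v \<in> e" "e = {a, b}" "a < n" "b < n"
      using G by (auto elim: graph_on_edgeE)
    then show "\<exists>u\<in>{u\<in>{..<n}. {v, u} \<in> F}. e = {v, u}"
      by (auto simp: insert_commute)
  qed (auto simp: doubleton_eq_iff)
  finally show ?thesis by (simp add: degree_def)
qed

lemma sum_adj_regular:
  "graph_on n F \<Longrightarrow> regular n F d \<Longrightarrow> v < n \<Longrightarrow> (\<Sum>u<n. adj F v u) = real d"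
  using sum_adj_eq_degree by (simp add: regular_def)

lemma card_edges_regular:
  assumes "graph_on n F" "regular n F d"
  shows "2 * real (card F) = real n * real d"
  using sum_edges_eq_sum_adj[OF assms(1), of "\<lambda>_. 1"] sum_adj_regular[OF assms] by simp

lemma is_copy_permutes_image:
  "\<sigma> permutes {..<n} \<Longrightarrow> is_copy n F ((\<lambda>e. \<sigma> ` e) ` F)"
  unfolding is_copy_def using permutes_imp_bij by blast

lemma sum_permutes_image:
  assumes "\<sigma> permutes {..<n}"
  shows "(\<Sum>e\<in>(\<lambda>e. \<sigma> ` e) ` F. h e) = (\<Sum>e\<in>F. h (\<sigma> ` e))"
proof -
  have "inj_on (\<lambda>e. \<sigma> ` e) F"
    using permutes_inj[OF assms] by (auto simp: inj_on_def inj_image_eq_iff)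
  then show ?thesis by (simp add: sum.reindex)
qed

lemma sum_rotate3:
  "(\<Sum>a\<in>A. \<Sum>b\<in>B. \<Sum>c\<in>C. h a b c) = (\<Sum>c\<in>C. \<Sum>a\<in>A. \<Sum>b\<in>B. h a b c)"
  by (simp only: sum.swap[of _ C])

lemma exists_ge_average:
  fixes x :: "'a \<Rightarrow> real"
  assumes "finite A" "A \<noteq> {}"
  shows "\<exists>a\<in>A. (\<Sum>b\<in>A. x b) \<le> x a * real (card A)"
proof -
  have "Max (x ` A) \<in> x ` A" using assms by simp
  then obtain a where "a \<in> A" "x a = Max (x ` A)" by auto
  moreover have "x b \<le> Max (x ` A)" if "b \<in> A" for b
    using that assms(1) by simp
  ultimately show ?thesis using sum_bounded_above[of A x "x a"] by (metis mult.commute)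
qed

lemma exists_abs_ge_average:
  fixes x :: "'a \<Rightarrow> real"
  assumes "finite A" "A \<noteq> {}"
  shows "\<exists>a\<in>A. \<bar>\<Sum>b\<in>A. x b\<bar> \<le> \<bar>x a\<bar> * real (card A)"
  using exists_ge_average[OF assms, of "\<lambda>b. \<bar>x b\<bar>"] sum_abs[of x A] by (meson order_trans)

section \<open>Colourings far from balanced\<close>

definition colour :: "(nat set \<Rightarrow> int) \<Rightarrow> nat \<Rightarrow> nat \<Rightarrow> real" where
  "colour f x y = real_of_int (f {x, y})"

definition colour_sum :: "nat \<Rightarrow> (nat set \<Rightarrow> int) \<Rightarrow> real" where
  "colour_sum n f = (\<Sum>e\<in>Kn_edges n. real_of_int (f e))"

lemma colour_sym: "colour f x y = colour f y x"
  by (simp add: colour_def insert_commute)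

lemma sum_ordered_pairs_Kn_edges:
  fixes h :: "nat set \<Rightarrow> real"
  shows "(\<Sum>a<n. \<Sum>b\<in>{..<n}-{a}. h {a, b}) = 2 * (\<Sum>e\<in>Kn_edges n. h e)"
proof -
  have "(\<Sum>b<n. adj (Kn_edges n) a b * h {a, b}) = (\<Sum>b\<in>{..<n}-{a}. h {a, b})" if "a < n" for a
  proof -
    have "(\<Sum>b<n. adj (Kn_edges n) a b * h {a, b}) = (\<Sum>b\<in>{..<n}-{a}. adj (Kn_edges n) a b * h {a, b})"
      by (rule sum.mono_neutral_right) (auto simp: adj_Kn_edges)
    also have "\<dots> = (\<Sum>b\<in>{..<n}-{a}. h {a, b})"
      using that by (intro sum.cong) (auto simp: adj_Kn_edges)
    finally show ?thesis .
  qed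
  then show ?thesis
    using sum_edges_eq_sum_adj[of n "Kn_edges n" h] by (simp add: graph_on_def)
qed

lemma sum_permutes_edge:
  fixes h :: "nat set \<Rightarrow> real"
  assumes "u < n" "v < n" "u \<noteq> v"
  shows "(\<Sum>\<sigma>\<in>{\<sigma>. \<sigma> permutes {..<n}}. h {\<sigma> u, \<sigma> v}) = 2 * fact (n - 2) * (\<Sum>e\<in>Kn_edges n. h e)"
proof -
  have "(\<Sum>\<sigma>\<in>{\<sigma>. \<sigma> permutes {..<n}}. h {\<sigma> u, \<sigma> v})
      = (\<Sum>\<sigma>\<in>{\<sigma>. \<sigma> permutes {..<n}}. (\<lambda>ys. h {ys!0, ys!1}) (map \<sigma> [u, v]))"
    by simp
  also have "\<dots> = fact (n - 2) * (\<Sum>ys\<in>distinct_lists 2 {..<n}. h {ys!0, ys!1})"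
    using sum_permutes_map_list[of "{..<n}" "[u, v]" "\<lambda>ys. h {ys!0, ys!1}"] assms
    by (simp add: numeral_2_eq_2)
  also have "\<dots> = fact (n - 2) * (\<Sum>a<n. \<Sum>b\<in>{..<n}-{a}. h {a, b})"
    by (simp add: sum_distinct_lists_2)
  finally show ?thesis by (simp add: sum_ordered_pairs_Kn_edges)
qed

lemma exists_permutes_colour_sum_ge:
  fixes f :: "nat set \<Rightarrow> int"
  assumes G: "graph_on n F" and R: "regular n F d" and n2: "2 \<le> n"
  shows "\<exists>\<sigma>. \<sigma> permutes {..<n} \<and>
           real d * \<bar>colour_sum n f\<bar> \<le> \<bar>\<Sum>e\<in>F. real_of_int (f (\<sigma> ` e))\<bar> * real (n - 1)"
proof -
  let ?P = "{\<sigma>. \<sigma> permutes {..<n}}"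
  let ?X = "\<lambda>\<sigma>. \<Sum>e\<in>F. real_of_int (f (\<sigma> ` e))"
  have "(\<Sum>\<sigma>\<in>?P. real_of_int (f (\<sigma> ` e))) = 2 * fact (n - 2) * colour_sum n f" if "e \<in> F" for e
    using that G sum_permutes_edge[of _ n _ "\<lambda>e. real_of_int (f e)"]
    by (auto simp: colour_sum_def elim: graph_on_edgeE)
  then have "(\<Sum>\<sigma>\<in>?P. ?X \<sigma>) = (\<Sum>e\<in>F. 2 * fact (n - 2) * colour_sum n f)"
    by (subst sum.swap) (rule sum.cong, auto)
  also have "\<dots> = real (card F) * (2 * fact (n - 2) * colour_sum n f)"
    by simp
  also have "\<dots> = real n * real d * fact (n - 2) * colour_sum n f"
    using card_edges_regular[OF G R] by simp
  finally have total: "(\<Sum>\<sigma>\<in>?P. ?X \<sigma>) = real n * real d * fact (n - 2) * colour_sum n f" .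
  have "?P \<noteq> {}" using permutes_id by blast
  then obtain \<sigma> where \<sigma>: "\<sigma> \<in> ?P" "\<bar>\<Sum>\<sigma>\<in>?P. ?X \<sigma>\<bar> \<le> \<bar>?X \<sigma>\<bar> * real (card ?P)"
    using exists_abs_ge_average[OF finite_permutations, of "{..<n}" ?X] by auto
  obtain m where m: "n = Suc (Suc m)" using n2 by (metis add_2_eq_Suc le_Suc_ex)
  have fact_n: "real (card ?P) = real n * real (n - 1) * fact (n - 2)"
    using card_permutations[of "{..<n}" n] by (simp add: m algebra_simps)
  have "(real d * \<bar>colour_sum n f\<bar>) * (real n * fact (n - 2))
      \<le> (\<bar>?X \<sigma>\<bar> * real (n - 1)) * (real n * fact (n - 2))"
    using \<sigma>(2) unfolding total fact_n by (simp add: abs_mult algebra_simps)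
  then have "real d * \<bar>colour_sum n f\<bar> \<le> \<bar>?X \<sigma>\<bar> * real (n - 1)"
    by (rule mult_right_le_imp_le) (use n2 in simp)
  then show ?thesis using \<sigma>(1) by blast
qed

lemma discrepancy_permutes_image:
  assumes "\<sigma> permutes {..<n}"
  shows "real_of_int (discrepancy f ((\<lambda>e. \<sigma> ` e) ` F)) = \<bar>\<Sum>e\<in>F. real_of_int (f (\<sigma> ` e))\<bar>"
  unfolding discrepancy_def using sum_permutes_image[OF assms, of "\<lambda>e. real_of_int (f e)" F] by simp

lemma exists_copy_unbalanced:
  assumes G: "graph_on n F" and R: "regular n F d" and n2: "2 \<le> n"
    and unbalanced: "real n * (real n - 1) / 4 \<le> \<bar>colour_sum n f\<bar>"
  shows "\<exists>H. is_copy n F H \<and> real d * real n / 4 \<le> real_of_int (discrepancy f H)"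
proof -
  obtain \<sigma> where \<sigma>: "\<sigma> permutes {..<n}"
    and ge: "real d * \<bar>colour_sum n f\<bar> \<le> \<bar>\<Sum>e\<in>F. real_of_int (f (\<sigma> ` e))\<bar> * real (n - 1)"
    using exists_permutes_colour_sum_ge[OF G R n2] by blast
  have "(real d * real n / 4) * (real n - 1) \<le> real d * \<bar>colour_sum n f\<bar>"
    using mult_left_mono[OF unbalanced, of "real d"] by (simp add: algebra_simps)
  moreover have "real (n - 1) = real n - 1" using n2 by simp
  ultimately have "(real d * real n / 4) * (real n - 1) \<le> \<bar>\<Sum>e\<in>F. real_of_int (f (\<sigma> ` e))\<bar> * (real n - 1)"
    using ge by simp
  then have "real d * real n / 4 \<le> \<bar>\<Sum>e\<in>F. real_of_int (f (\<sigma> ` e))\<bar>"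
    by (rule mult_right_le_imp_le) (use n2 in simp)
  then show ?thesis
    using is_copy_permutes_image[OF \<sigma>] discrepancy_permutes_image[OF \<sigma>] by metis
qed

section \<open>Switching the two vertices of a pair\<close>

text \<open>Vertices 2i and 2i+1 form the i-th pair. The pairs with i < k are switched by swap_pairs;
  the next L pairs, with vertices 2k+2l and 2k+2l+1, are the couples switched by swap_couples.\<close>

definition partner :: "nat \<Rightarrow> nat" where
  "partner v = (if even v then Suc v else v - 1)"

lemma partner_partner[simp]: "partner (partner v) = v"
  by (auto simp: partner_def)

lemma partner_neq[simp]: "partner v \<noteq> v"
  unfolding partner_def by (cases "even v") (auto elim: oddE)

lemma partner_div2[simp]: "partner v div 2 = v div 2"
  by (auto simp: partner_def elim!: oddE)

lemma partner_lt: "v < 2 * k \<Longrightarrow> partner v < 2 * k"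
  by (auto simp: partner_def elim!: oddE)

lemma partner_ge: "2 * k \<le> v \<Longrightarrow> 2 * k \<le> partner v"
  by (auto simp: partner_def elim!: oddE)

lemma partner_eq_div: "z div 2 = a div 2 \<Longrightarrow> z = a \<or> z = partner a"
  by (auto simp: partner_def elim!: oddE evenE)

lemma partner_couple:
  "2 * k \<le> v \<Longrightarrow> (partner v - 2 * k) div 2 = (v - 2 * k) div 2"
  by (auto simp: partner_def elim!: oddE) presburger+

definition swap_pairs :: "nat \<Rightarrow> nat set \<Rightarrow> nat \<Rightarrow> nat" where
  "swap_pairs k S v = (if v < 2 * k \<and> v div 2 \<in> S then partner v else v)"

definition pair_sign :: "nat set \<Rightarrow> nat \<Rightarrow> real" where
  "pair_sign S i = (if i \<in> S then -1 else 1)"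

definition swap_effect :: "nat \<Rightarrow> (nat \<Rightarrow> nat \<Rightarrow> real) \<Rightarrow> nat \<Rightarrow> nat \<Rightarrow> real" where
  "swap_effect k g a z = (if z < 2 * k
      then (g a z + g a (partner z) - g (partner a) z - g (partner a) (partner z)) / 2
      else g a z - g (partner a) z)"

definition odd_term :: "nat \<Rightarrow> nat set \<Rightarrow> (nat \<Rightarrow> nat \<Rightarrow> real) \<Rightarrow> nat \<Rightarrow> nat \<Rightarrow> real" where
  "odd_term k S g a z = (if a < 2 * k \<and> z \<noteq> a \<and> z \<noteq> partner a then pair_sign S (a div 2) * swap_effect k g a z else 0)"

definition pair_switched_sum :: "nat \<Rightarrow> nat \<Rightarrow> (nat \<Rightarrow> nat \<Rightarrow> real) \<Rightarrow> (nat \<Rightarrow> nat \<Rightarrow> real) \<Rightarrow> nat set \<Rightarrow> real" where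
  "pair_switched_sum n k g A S = (\<Sum>a<n. \<Sum>z<n. A a z * g (swap_pairs k S a) (swap_pairs k S z))"

definition vertex_coeff :: "nat \<Rightarrow> nat \<Rightarrow> (nat \<Rightarrow> nat \<Rightarrow> real) \<Rightarrow> (nat \<Rightarrow> nat \<Rightarrow> real) \<Rightarrow> nat \<Rightarrow> real" where
  "vertex_coeff n k g A a = (\<Sum>z<n. if z = a \<or> z = partner a then 0 else A a z * swap_effect k g a z)"

definition pair_coeff :: "nat \<Rightarrow> nat \<Rightarrow> (nat \<Rightarrow> nat \<Rightarrow> real) \<Rightarrow> (nat \<Rightarrow> nat \<Rightarrow> real) \<Rightarrow> nat \<Rightarrow> real" where
  "pair_coeff n k g A i = vertex_coeff n k g A (2 * i) + vertex_coeff n k g A (2 * i + 1)"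

lemma swap_pairs_swap_pairs[simp]: "swap_pairs k S (swap_pairs k S v) = v"
  by (auto simp: swap_pairs_def partner_lt)

lemma swap_pairs_permutes: "2 * k \<le> n \<Longrightarrow> swap_pairs k S permutes {..<n}"
proof -
  assume k_le: "2 * k \<le> n"
  have "swap_pairs k S permutes {..<2*k}"
  proof (rule inj_imp_permutes)
    show "inj_on (swap_pairs k S) {..<2 * k}" by (rule inj_onI) (drule arg_cong[where f="swap_pairs k S"], simp)
    show "\<And>x. x \<in> {..<2 * k} \<Longrightarrow> swap_pairs k S x \<in> {..<2 * k}"
      using partner_lt[of _ k] by (auto simp: swap_pairs_def)
    show "\<And>i. i \<notin> {..<2 * k} \<Longrightarrow> swap_pairs k S i = i" by (auto simp: swap_pairs_def)
  qed simp
  then show ?thesis by (rule permutes_subset) (use k_le in auto)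
qed

lemma switched_weight_diff_two_pairs:
  fixes g :: "nat \<Rightarrow> nat \<Rightarrow> real" and k :: nat and S :: "nat set"
  assumes g_sym: "\<And>x y. g x y = g y x"
    and az: "a < 2 * k" "z < 2 * k" "z div 2 \<noteq> a div 2"
  defines "S' \<equiv> {..<k} - S"
  shows "g (swap_pairs k S a) (swap_pairs k S z) - g (swap_pairs k S' a) (swap_pairs k S' z)
       = odd_term k S g a z + odd_term k S g z a"
proof -
  have "z \<noteq> a" "z \<noteq> partner a" "a \<noteq> partner z" "a div 2 < k" "z div 2 < k"
    using az by (auto dest: arg_cong[of _ _ "\<lambda>v. v div 2"])
  moreover have "partner a < 2 * k" "partner z < 2 * k" using az partner_lt by auto
  moreover have "g z a = g a z" "g (partner z) a = g a (partner z)" "g z (partner a) = g (partner a) z"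
    "g (partner z) (partner a) = g (partner a) (partner z)" using g_sym by auto
  ultimately show ?thesis
    using az unfolding odd_term_def swap_pairs_def S'_def swap_effect_def pair_sign_def
    by (cases "a div 2 \<in> S"; cases "z div 2 \<in> S"; simp add: field_simps)
qed

text \<open>The terms quadratic in the pair signs cancel: only terms linear in the signs survive.\<close>
lemma switched_weight_diff:
  fixes g :: "nat \<Rightarrow> nat \<Rightarrow> real" and k :: nat and S :: "nat set"
  assumes g_sym: "\<And>x y. g x y = g y x" and az: "a \<noteq> z"
  defines "S' \<equiv> {..<k} - S"
  shows "g (swap_pairs k S a) (swap_pairs k S z) - g (swap_pairs k S' a) (swap_pairs k S' z)
       = odd_term k S g a z + odd_term k S g z a"
proof -
  have ga: "g (partner a) a = g a (partner a)" "g z a = g a z" "g (partner z) a = g a (partner z)"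
    using g_sym by auto
  consider "a < 2 * k" "z = partner a" | "a < 2 * k" "z < 2 * k" "z div 2 \<noteq> a div 2"
    | "a < 2 * k" "\<not> z < 2 * k" | "\<not> a < 2 * k" "z < 2 * k" | "\<not> a < 2 * k" "\<not> z < 2 * k"
    using partner_eq_div az by blast
  then show ?thesis
  proof cases
    case 1
    then show ?thesis using ga partner_lt[of a k] unfolding odd_term_def swap_pairs_def S'_def
      by (cases "a div 2 \<in> S") auto
  next
    case 2
    then show ?thesis
      using switched_weight_diff_two_pairs[where g = g and k = k and S = S, OF g_sym] unfolding S'_def by blast
  next
    case 3
    then show ?thesis using az partner_lt[of a k]
      unfolding odd_term_def swap_pairs_def S'_def swap_effect_def pair_sign_def
      by (cases "a div 2 \<in> S") auto
  next
    case 4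
    then show ?thesis using az partner_lt[of z k] ga
      unfolding odd_term_def swap_pairs_def S'_def swap_effect_def pair_sign_def
      by (cases "z div 2 \<in> S") auto
  next
    case 5
    then show ?thesis unfolding odd_term_def swap_pairs_def by auto
  qed
qed

lemma sum_atLeastLessThan_double:
  fixes h :: "nat \<Rightarrow> real"
  shows "(\<Sum>z\<in>{m..<m+2*L}. h z) = (\<Sum>l<L. h (m + 2*l) + h (m + 2*l + 1))"
proof (induction L)
  case 0 then show ?case by simp
next
  case (Suc L)
  have "{m..<m + 2 * Suc L} = insert (m+2*L+1) (insert (m+2*L) {m..<m+2*L})" by auto
  then have "(\<Sum>z\<in>{m..<m + 2 * Suc L}. h z) = h (m+2*L+1) + (h (m+2*L) + (\<Sum>z\<in>{m..<m+2*L}. h z))" by simp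
  then show ?case using Suc by simp
qed

lemma pair_switched_sum_odd_part:
  fixes g A :: "nat \<Rightarrow> nat \<Rightarrow> real"
  assumes g_sym: "\<And>x y. g x y = g y x" and A_sym: "\<And>x y. A x y = A y x" and A_self: "\<And>x. A x x = 0"
    and k_le: "2 * k \<le> n"
  shows "pair_switched_sum n k g A S - pair_switched_sum n k g A ({..<k} - S) = 2 * (\<Sum>i<k. pair_sign S i * pair_coeff n k g A i)"
proof -
  let ?S' = "{..<k} - S"
  have "pair_switched_sum n k g A S - pair_switched_sum n k g A ?S'
      = (\<Sum>a<n. \<Sum>z<n. A a z * (g (swap_pairs k S a) (swap_pairs k S z) - g (swap_pairs k ?S' a) (swap_pairs k ?S' z)))"
    unfolding pair_switched_sum_def by (simp add: sum_subtractf right_diff_distrib)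
  also have "\<dots> = (\<Sum>a<n. \<Sum>z<n. A a z * (odd_term k S g a z + odd_term k S g z a))"
  proof (intro sum.cong refl)
    fix a z
    show "A a z * (g (swap_pairs k S a) (swap_pairs k S z) - g (swap_pairs k ?S' a) (swap_pairs k ?S' z)) = A a z * (odd_term k S g a z + odd_term k S g z a)"
    proof (cases "a = z")
      case True then show ?thesis using A_self by simp
    next
      case False then show ?thesis using switched_weight_diff[where g=g and k=k and S=S, OF g_sym False] by simp
    qed
  qed
  also have "\<dots> = (\<Sum>a<n. \<Sum>z<n. A a z * odd_term k S g a z) + (\<Sum>a<n. \<Sum>z<n. A a z * odd_term k S g z a)"
    by (simp add: distrib_left sum.distrib)
  also have "(\<Sum>a<n. \<Sum>z<n. A a z * odd_term k S g z a) = (\<Sum>z<n. \<Sum>a<n. A z a * odd_term k S g z a)"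
    by (subst sum.swap) (simp add: A_sym)
  also have "(\<Sum>a<n. \<Sum>z<n. A a z * odd_term k S g a z) = (\<Sum>a<n. if a < 2 * k then pair_sign S (a div 2) * vertex_coeff n k g A a else 0)"
  proof (intro sum.cong refl)
    fix a
    show "(\<Sum>z<n. A a z * odd_term k S g a z) = (if a < 2 * k then pair_sign S (a div 2) * vertex_coeff n k g A a else 0)"
      unfolding odd_term_def vertex_coeff_def by (auto simp: sum_distrib_left intro!: sum.cong)
  qed
  also have "\<dots> = (\<Sum>a<2*k. pair_sign S (a div 2) * vertex_coeff n k g A a)"
  proof -
    have "{..<n} \<inter> {a. a < 2 * k} = {..<2*k}" using k_le by auto
    then show ?thesis by (simp add: sum.If_cases)
  qed
  also have "\<dots> = (\<Sum>i<k. pair_sign S i * pair_coeff n k g A i)"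
    using sum_atLeastLessThan_double[of "\<lambda>a. pair_sign S (a div 2) * vertex_coeff n k g A a" 0 k]
    by (simp add: atLeast0LessThan pair_coeff_def distrib_left)
  finally show ?thesis by simp
qed

lemma exists_pair_switch_ge:
  fixes g A :: "nat \<Rightarrow> nat \<Rightarrow> real"
  assumes g_sym: "\<And>x y. g x y = g y x" and A_sym: "\<And>x y. A x y = A y x" and A_self: "\<And>x. A x x = 0"
    and k_le: "2 * k \<le> n"
  shows "\<exists>S. \<bar>pair_switched_sum n k g A S\<bar> \<ge> (\<Sum>i<k. \<bar>pair_coeff n k g A i\<bar>)"
proof -
  define S0 where "S0 = {i. i < k \<and> pair_coeff n k g A i < 0}"
  have "(\<Sum>i<k. pair_sign S0 i * pair_coeff n k g A i) = (\<Sum>i<k. \<bar>pair_coeff n k g A i\<bar>)"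
    by (intro sum.cong refl) (auto simp: pair_sign_def S0_def)
  then have "pair_switched_sum n k g A S0 - pair_switched_sum n k g A ({..<k} - S0) = 2 * (\<Sum>i<k. \<bar>pair_coeff n k g A i\<bar>)"
    using pair_switched_sum_odd_part[OF g_sym A_sym A_self k_le, where S=S0] by simp
  then have "\<bar>pair_switched_sum n k g A S0\<bar> \<ge> (\<Sum>i<k. \<bar>pair_coeff n k g A i\<bar>) \<or> \<bar>pair_switched_sum n k g A ({..<k} - S0)\<bar> \<ge> (\<Sum>i<k. \<bar>pair_coeff n k g A i\<bar>)"
    by linarith
  then show ?thesis by blast
qed

definition swap_couples :: "nat \<Rightarrow> nat \<Rightarrow> nat set \<Rightarrow> nat \<Rightarrow> nat" where
  "swap_couples k L R v = (if 2 * k \<le> v \<and> v < 2 * k + 2 * L \<and> (v - 2 * k) div 2 \<in> R then partner v else v)"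

lemma partner_range:
  "2 * k \<le> v \<Longrightarrow> v < 2 * k + 2 * L \<Longrightarrow> 2 * k \<le> partner v \<and> partner v < 2 * k + 2 * L"
  using partner_ge[of k v] partner_lt[of v "k + L"] by (simp add: algebra_simps)

lemma swap_couples_swap_couples[simp]: "swap_couples k L R (swap_couples k L R v) = v"
proof (cases "2 * k \<le> v \<and> v < 2 * k + 2 * L \<and> (v - 2 * k) div 2 \<in> R")
  case True
  then have a: "2 * k \<le> v" "v < 2 * k + 2 * L" "(v - 2 * k) div 2 \<in> R" by auto
  have b: "2 * k \<le> partner v" "partner v < 2 * k + 2 * L" using partner_range a by auto
  have c: "(partner v - 2 * k) div 2 = (v - 2 * k) div 2" using a partner_couple by auto
  have "swap_couples k L R v = partner v" using a by (simp add: swap_couples_def)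
  moreover have "swap_couples k L R (partner v) = v" using a b c by (simp add: swap_couples_def)
  ultimately show ?thesis by simp
next
  case False
  then have "swap_couples k L R v = v" by (simp add: swap_couples_def)
  then show ?thesis using False by simp
qed

lemma swap_couples_below[simp]: "v < 2 * k \<Longrightarrow> swap_couples k L R v = v"
  by (simp add: swap_couples_def)

lemma swap_couples_permutes: "2 * k + 2 * L \<le> n \<Longrightarrow> swap_couples k L R permutes {..<n}"
proof -
  assume kL: "2 * k + 2 * L \<le> n"
  have "swap_couples k L R permutes {..<n}"
  proof (rule inj_imp_permutes)
    show "inj_on (swap_couples k L R) {..<n}" by (rule inj_onI) (drule arg_cong[where f="swap_couples k L R"], simp)
    show "\<And>x. x \<in> {..<n} \<Longrightarrow> swap_couples k L R x \<in> {..<n}"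
      using partner_range[of k _ L] kL by (force simp: swap_couples_def)
    show "\<And>i. i \<notin> {..<n} \<Longrightarrow> swap_couples k L R i = i" using kL by (auto simp: swap_couples_def)
  qed simp
  then show ?thesis .
qed

lemma swap_couples_even: "l < L \<Longrightarrow> swap_couples k L R (2*k + 2*l) = (if l \<in> R then 2*k + 2*l + 1 else 2*k + 2*l)"
  by (simp add: swap_couples_def partner_def)

lemma swap_couples_odd: "l < L \<Longrightarrow> swap_couples k L R (Suc (2*k + 2*l)) = (if l \<in> R then 2*k + 2*l else 2*k + 2*l + 1)"
proof -
  assume l: "l < L"
  have "(Suc (2*k + 2*l) - 2*k) div 2 = l" by simp
  then show ?thesis using l by (simp add: swap_couples_def partner_def)
qed

definition couple_switched :: "nat \<Rightarrow> nat \<Rightarrow> (nat \<Rightarrow> nat \<Rightarrow> real) \<Rightarrow> nat set \<Rightarrow> nat \<Rightarrow> nat \<Rightarrow> real" where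
  "couple_switched k L A R a z = A (swap_couples k L R a) (swap_couples k L R z)"

definition couple_kept_term :: "nat \<Rightarrow> (nat \<Rightarrow> nat \<Rightarrow> real) \<Rightarrow> (nat \<Rightarrow> nat \<Rightarrow> real) \<Rightarrow> nat \<Rightarrow> nat \<Rightarrow> real" where
  "couple_kept_term k g A a l = A a (2*k+2*l) * (g a (2*k+2*l) - g (partner a) (2*k+2*l))
                 + A a (2*k+2*l+1) * (g a (2*k+2*l+1) - g (partner a) (2*k+2*l+1))"

definition couple_swapped_term :: "nat \<Rightarrow> (nat \<Rightarrow> nat \<Rightarrow> real) \<Rightarrow> (nat \<Rightarrow> nat \<Rightarrow> real) \<Rightarrow> nat \<Rightarrow> nat \<Rightarrow> real" where
  "couple_swapped_term k g A a l = A a (2*k+2*l) * (g a (2*k+2*l+1) - g (partner a) (2*k+2*l+1))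
                 + A a (2*k+2*l+1) * (g a (2*k+2*l) - g (partner a) (2*k+2*l))"

definition couple_free_coeff :: "nat \<Rightarrow> nat \<Rightarrow> nat \<Rightarrow> (nat \<Rightarrow> nat \<Rightarrow> real) \<Rightarrow> (nat \<Rightarrow> nat \<Rightarrow> real) \<Rightarrow> nat \<Rightarrow> real" where
  "couple_free_coeff n k L g A a = (\<Sum>z<2*k. if z = a \<or> z = partner a then 0 else A a z * swap_effect k g a z)
      + (\<Sum>z\<in>{2*k+2*L..<n}. A a z * (g a z - g (partner a) z))"

lemma sum_couples_swap_effect:
  assumes a: "a < 2 * k"
  shows "(\<Sum>z\<in>{2*k..<2*k+2*L}. A a z * swap_effect k g a (swap_couples k L R z))
       = (\<Sum>l<L. if l \<in> R then couple_swapped_term k g A a l else couple_kept_term k g A a l)"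
proof -
  let ?c = "swap_couples k L R"
  have "(\<Sum>z\<in>{2*k..<2*k+2*L}. A a z * swap_effect k g a (?c z))
      = (\<Sum>z\<in>{2*k..<2*k+2*L}. A a z * (g a (?c z) - g (partner a) (?c z)))"
  proof (intro sum.cong refl)
    fix z assume "z \<in> {2*k..<2*k+2*L}"
    then have "2 * k \<le> ?c z" using partner_range[of k z L] by (auto simp: swap_couples_def)
    then show "A a z * swap_effect k g a (?c z) = A a z * (g a (?c z) - g (partner a) (?c z))"
      by (simp add: swap_effect_def)
  qed
  also have "\<dots> = (\<Sum>l<L. A a (2*k+2*l) * (g a (?c (2*k+2*l)) - g (partner a) (?c (2*k+2*l)))
        + A a (2*k+2*l+1) * (g a (?c (2*k+2*l+1)) - g (partner a) (?c (2*k+2*l+1))))"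
    by (rule sum_atLeastLessThan_double)
  also have "\<dots> = (\<Sum>l<L. if l \<in> R then couple_swapped_term k g A a l else couple_kept_term k g A a l)"
    by (intro sum.cong refl)
      (auto simp: swap_couples_even swap_couples_odd couple_kept_term_def couple_swapped_term_def)
  finally show ?thesis .
qed

lemma vertex_coeff_couple_switched:
  assumes kL: "2 * k + 2 * L \<le> n" and a: "a < 2 * k"
  shows "vertex_coeff n k g (couple_switched k L A R) a = couple_free_coeff n k L g A a
     + (\<Sum>l<L. if l \<in> R then couple_swapped_term k g A a l else couple_kept_term k g A a l)"
proof -
  let ?c = "swap_couples k L R"
  let ?t = "\<lambda>z. if z = a \<or> z = partner a then 0 else A a z * swap_effect k g a (?c z)"
  have pa: "partner a < 2 * k" using a partner_lt by auto
  have fixed: "?c z = a \<longleftrightarrow> z = a" "?c z = partner a \<longleftrightarrow> z = partner a" for z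
    using a pa by (metis swap_couples_swap_couples swap_couples_below)+
  have "vertex_coeff n k g (couple_switched k L A R) a
      = (\<Sum>z<n. if z = a \<or> z = partner a then 0 else A a (?c z) * swap_effect k g a z)"
    unfolding vertex_coeff_def couple_switched_def by (simp only: swap_couples_below[OF a])
  also have "\<dots> = (\<Sum>z<n. if ?c z = a \<or> ?c z = partner a then 0 else A a (?c (?c z)) * swap_effect k g a (?c z))"
    using sum.permute[OF swap_couples_permutes[OF kL, of R]] by (simp add: o_def)
  also have "\<dots> = (\<Sum>z<n. ?t z)"
    by (simp only: fixed swap_couples_swap_couples)
  also have "{..<n} = {..<2*k} \<union> ({2*k..<2*k+2*L} \<union> {2*k+2*L..<n})" using kL by auto
  also have "sum ?t \<dots> = sum ?t {..<2*k} + (sum ?t {2*k..<2*k+2*L} + sum ?t {2*k+2*L..<n})"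
    by (subst sum.union_disjoint; auto)+
  also have "sum ?t {..<2*k} = (\<Sum>z<2*k. if z = a \<or> z = partner a then 0 else A a z * swap_effect k g a z)"
    by (intro sum.cong refl) simp
  also have "sum ?t {2*k..<2*k+2*L} = (\<Sum>z\<in>{2*k..<2*k+2*L}. A a z * swap_effect k g a (?c z))"
    using a pa by (intro sum.cong refl) auto
  also have "sum ?t {2*k+2*L..<n} = (\<Sum>z\<in>{2*k+2*L..<n}. A a z * (g a z - g (partner a) z))"
    using a pa by (intro sum.cong refl) (auto simp: swap_couples_def swap_effect_def)
  finally show ?thesis
    unfolding couple_free_coeff_def sum_couples_swap_effect[OF a] by (simp add: algebra_simps)
qed

lemma pair_coeff_couple_switched:
  assumes kL: "2 * k + 2 * L \<le> n" and i: "i < k"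
  shows "pair_coeff n k g (couple_switched k L A R) i
     = (couple_free_coeff n k L g A (2*i) + couple_free_coeff n k L g A (2*i+1))
     + (\<Sum>l<L. if l \<in> R then couple_swapped_term k g A (2*i) l + couple_swapped_term k g A (2*i+1) l
                         else couple_kept_term k g A (2*i) l + couple_kept_term k g A (2*i+1) l)"
  unfolding pair_coeff_def using i
  by (simp add: vertex_coeff_couple_switched[OF kL] sum.distrib[symmetric] if_distrib algebra_simps cong: if_cong)

definition cross_diff :: "nat \<Rightarrow> (nat \<Rightarrow> nat \<Rightarrow> real) \<Rightarrow> nat \<Rightarrow> nat \<Rightarrow> real" where
  "cross_diff k h i l = h (2*i) (2*k+2*l) - h (2*i+1) (2*k+2*l) - h (2*i) (2*k+2*l+1) + h (2*i+1) (2*k+2*l+1)"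

lemma couple_term_diff:
  "(couple_kept_term k g A (2*i) l + couple_kept_term k g A (2*i+1) l)
     - (couple_swapped_term k g A (2*i) l + couple_swapped_term k g A (2*i+1) l)
   = cross_diff k g i l * cross_diff k A i l"
proof -
  have "partner (2*i) = 2*i+1" "partner (2*i+1) = 2*i" by (auto simp: partner_def)
  then show ?thesis
    unfolding couple_kept_term_def couple_swapped_term_def cross_diff_def by (simp add: algebra_simps)
qed

section \<open>Sums with random signs\<close>

definition signed_sum :: "nat \<Rightarrow> (nat \<Rightarrow> real) \<Rightarrow> nat set \<Rightarrow> real" where
  "signed_sum L b R = (\<Sum>l<L. if l \<in> R then - b l else b l)"

lemma sum_Pow_lessThan_Suc:
  fixes h :: "nat set \<Rightarrow> real"
  shows "(\<Sum>R\<in>Pow {..<Suc L}. h R) = (\<Sum>R\<in>Pow {..<L}. h R + h (insert L R))"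
proof -
  have disj: "Pow {..<L} \<inter> insert L ` Pow {..<L} = {}" by auto
  have inj: "inj_on (insert L) (Pow {..<L})"
    by (rule inj_onI) (auto simp: insert_ident subset_eq dest: arg_cong[where f="\<lambda>X. X - {L}"])
  show ?thesis
    unfolding lessThan_Suc Pow_insert
    by (subst sum.union_disjoint) (auto simp: disj sum.reindex[OF inj] sum.distrib)
qed

lemma signed_sum_Suc:
  assumes "R \<subseteq> {..<L}"
  shows "signed_sum (Suc L) b R = signed_sum L b R + b L" and "signed_sum (Suc L) b (insert L R) = signed_sum L b R - b L"
proof -
  have "L \<notin> R" using assms by auto
  then show "signed_sum (Suc L) b R = signed_sum L b R + b L" by (simp add: signed_sum_def)
  have "(\<Sum>l<L. if l \<in> insert L R then - b l else b l) = (\<Sum>l<L. if l \<in> R then - b l else b l)"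
    by (intro sum.cong refl) auto
  then show "signed_sum (Suc L) b (insert L R) = signed_sum L b R - b L" by (simp add: signed_sum_def)
qed

lemma sum_Pow_signed_sum_Suc:
  fixes h :: "real \<Rightarrow> real"
  shows "(\<Sum>R\<in>Pow {..<Suc L}. h (signed_sum (Suc L) b R)) = (\<Sum>R\<in>Pow {..<L}. h (signed_sum L b R + b L) + h (signed_sum L b R - b L))"
  unfolding sum_Pow_lessThan_Suc by (intro sum.cong refl) (simp add: signed_sum_Suc)

lemma sum_signed_sum_power2: "(\<Sum>R\<in>Pow {..<L}. (signed_sum L b R)^2) = 2^L * (\<Sum>l<L. (b l)^2)"
proof (induction L)
  case 0 then show ?case by (simp add: signed_sum_def)
next
  case (Suc L)
  have "(\<Sum>R\<in>Pow {..<Suc L}. (signed_sum (Suc L) b R)^2) = (\<Sum>R\<in>Pow {..<L}. (signed_sum L b R + b L)^2 + (signed_sum L b R - b L)^2)"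
    using sum_Pow_signed_sum_Suc[of "\<lambda>x. x^2" L b] by simp
  also have "\<dots> = (\<Sum>R\<in>Pow {..<L}. 2 * (signed_sum L b R)^2 + 2 * (b L)^2)"
    by (intro sum.cong refl) (simp add: power2_eq_square algebra_simps)
  also have "\<dots> = 2 * (\<Sum>R\<in>Pow {..<L}. (signed_sum L b R)^2) + 2 * 2^L * (b L)^2"
    by (simp add: sum.distrib sum_distrib_left card_Pow)
  finally show ?case using Suc by (simp add: algebra_simps)
qed

lemma sum_signed_sum_power4_le: "(\<Sum>R\<in>Pow {..<L}. (signed_sum L b R)^4) \<le> 3 * 2^L * (\<Sum>l<L. (b l)^2)^2"
proof (induction L)
  case 0 then show ?case by (simp add: signed_sum_def)
next
  case (Suc L)
  let ?V = "\<Sum>l<L. (b l)^2"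
  have "(\<Sum>R\<in>Pow {..<Suc L}. (signed_sum (Suc L) b R)^4) = (\<Sum>R\<in>Pow {..<L}. (signed_sum L b R + b L)^4 + (signed_sum L b R - b L)^4)"
    using sum_Pow_signed_sum_Suc[of "\<lambda>x. x^4" L b] by simp
  also have "\<dots> = (\<Sum>R\<in>Pow {..<L}. 2 * (signed_sum L b R)^4 + 12 * (b L)^2 * (signed_sum L b R)^2 + 2 * (b L)^4)"
    by (intro sum.cong refl) (simp add: power2_eq_square power4_eq_xxxx algebra_simps)
  also have "\<dots> = 2 * (\<Sum>R\<in>Pow {..<L}. (signed_sum L b R)^4) + 12 * (b L)^2 * (\<Sum>R\<in>Pow {..<L}. (signed_sum L b R)^2) + 2 * 2^L * (b L)^4"
    by (simp add: sum.distrib sum_distrib_left card_Pow)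
  also have "\<dots> \<le> 2 * (3 * 2^L * ?V^2) + 12 * (b L)^2 * (2^L * ?V) + 2 * 2^L * (b L)^4"
    using Suc sum_signed_sum_power2[of L b] by simp
  also have "\<dots> \<le> 3 * 2^(Suc L) * (?V + (b L)^2)^2"
  proof -
    have "0 \<le> (2::real)^L * (b L)^4" by simp
    then show ?thesis by (simp add: power2_eq_square power4_eq_xxxx algebra_simps)
  qed
  finally show ?case by simp
qed

text \<open>The difference of the two sides is |z| (|z| - t)^2 (|z| + 2 t) / (2 t^3).\<close>
lemma abs_ge_quartic:
  fixes z t :: real
  assumes t: "t > 0"
  shows "\<bar>z\<bar> \<ge> 3 / (2 * t) * z^2 - 1 / (2 * t^3) * z^4"
proof -
  define w where "w = \<bar>z\<bar>"
  have w0: "w \<ge> 0" by (simp add: w_def)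
  have z2: "z^2 = w^2" and z4: "z^4 = w^4" by (simp_all add: w_def power_even_abs_numeral)
  have "0 \<le> w * (w - t)^2 * (w + 2 * t)" using w0 t by simp
  also have "w * (w - t)^2 * (w + 2 * t) = w^4 - 3 * t^2 * w^2 + 2 * t^3 * w"
    by (simp add: power2_eq_square power4_eq_xxxx power3_eq_cube algebra_simps)
  finally have "3 * t^2 * w^2 - w^4 \<le> 2 * t^3 * w" by simp
  then have "(3 * t^2 * w^2 - w^4) / (2 * t^3) \<le> w" using t by (simp add: divide_le_eq mult.commute)
  moreover have "(3 * t^2 * w^2 - w^4) / (2 * t^3) = 3 / (2 * t) * w^2 - 1 / (2 * t^3) * w^4"
    using t by (simp add: field_simps power2_eq_square power3_eq_cube)
  ultimately show ?thesis unfolding z2 z4 w_def by simp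
qed

text \<open>A fourth-moment form of Khintchine's inequality, averaging over all sign patterns.\<close>
lemma sum_abs_signed_sum_ge:
  fixes b :: "nat \<Rightarrow> real" and t :: real
  assumes t: "t > 0" and V: "2 * (\<Sum>l<L. (b l)^2) \<le> t^2"
  shows "(\<Sum>R\<in>Pow {..<L}. \<bar>signed_sum L b R\<bar>) \<ge> 2^L * (3 / (4 * t)) * (\<Sum>l<L. (b l)^2)"
proof -
  define V where "V = (\<Sum>l<L. (b l)^2)"
  define M where "M = (\<Sum>R\<in>Pow {..<L}. (signed_sum L b R)^4)"
  have V0: "V \<ge> 0" unfolding V_def by (simp add: sum_nonneg)
  have VV: "2 * V \<le> t^2" using V unfolding V_def .
  have M: "M \<le> 3 * 2^L * V^2" unfolding M_def V_def by (rule sum_signed_sum_power4_le)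
  have s1: "(\<Sum>R\<in>Pow {..<L}. 3 / (2 * t) * (signed_sum L b R)^2 - 1 / (2 * t^3) * (signed_sum L b R)^4)
      \<le> (\<Sum>R\<in>Pow {..<L}. \<bar>signed_sum L b R\<bar>)"
    by (intro sum_mono abs_ge_quartic[OF t])
  have s2: "(\<Sum>R\<in>Pow {..<L}. 3 / (2 * t) * (signed_sum L b R)^2 - 1 / (2 * t^3) * (signed_sum L b R)^4)
      = 3 / (2 * t) * (\<Sum>R\<in>Pow {..<L}. (signed_sum L b R)^2) - 1 / (2 * t^3) * M"
    unfolding M_def by (simp only: sum_subtractf sum_distrib_left)
  have s3: "(\<Sum>R\<in>Pow {..<L}. (signed_sum L b R)^2) = 2^L * V" unfolding V_def by (rule sum_signed_sum_power2)
  have s4: "1 / (2 * t^3) * M \<le> 1 / (2 * t^3) * (3 * 2^L * V^2)"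
    using M t by (intro mult_left_mono) auto
  have s5: "1 / (2 * t^3) * (3 * 2^L * V^2) = (3 / (2 * t) * (2^L * V)) * (V / t^2)"
    using t by (simp add: field_simps power2_eq_square power3_eq_cube)
  have s6: "V / t^2 \<le> 1/2" using VV t by (simp add: divide_le_eq)
  have s7: "(3 / (2 * t) * (2^L * V)) * (V / t^2) \<le> (3 / (2 * t) * (2^L * V)) * (1/2)"
    using s6 t V0 by (intro mult_left_mono) auto
  have s8: "3 / (2 * t) * (2^L * V) - (3 / (2 * t) * (2^L * V)) * (1/2) = 2^L * (3 / (4 * t)) * V"
    using t by (simp add: field_simps)
  have s2': "(\<Sum>R\<in>Pow {..<L}. 3 / (2 * t) * (signed_sum L b R)^2 - 1 / (2 * t^3) * (signed_sum L b R)^4)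
      = 3 / (2 * t) * (2^L * V) - 1 / (2 * t^3) * M"
    using s2 unfolding s3 .
  have "2^L * (3 / (4 * t)) * V \<le> (\<Sum>R\<in>Pow {..<L}. \<bar>signed_sum L b R\<bar>)"
    using s1 s2' s4 s5 s7 s8 by linarith
  then show ?thesis unfolding V_def .
qed

lemma sum_abs_choice_ge_signed_sum:
  fixes c :: real and p q :: "nat \<Rightarrow> real"
  shows "(\<Sum>R\<in>Pow {..<L}. \<bar>c + (\<Sum>l<L. if l \<in> R then p l else q l)\<bar>)
       \<ge> (\<Sum>R\<in>Pow {..<L}. \<bar>signed_sum L (\<lambda>l. (q l - p l) / 2) R\<bar>)"
proof -
  let ?b = "\<lambda>l. (q l - p l) / 2"
  define c' where "c' = c + (\<Sum>l<L. (p l + q l) / 2)"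
  have eq: "c + (\<Sum>l<L. if l \<in> R then p l else q l) = c' + signed_sum L ?b R" for R
    unfolding c'_def signed_sum_def by (simp add: sum.distrib[symmetric] add_divide_distrib[symmetric] algebra_simps)
      (intro sum.cong refl, auto simp: field_simps)
  have comp: "signed_sum L ?b ({..<L} - R) = - signed_sum L ?b R" for R
    unfolding signed_sum_def by (simp add: sum_negf[symmetric]) (intro sum.cong refl, auto)
  have bij: "bij_betw (\<lambda>R. {..<L} - R) (Pow {..<L}) (Pow {..<L})"
    by (rule bij_betwI[where g="\<lambda>R. {..<L} - R"]) auto
  have "(\<Sum>R\<in>Pow {..<L}. \<bar>c' - signed_sum L ?b R\<bar>) = (\<Sum>R\<in>Pow {..<L}. \<bar>c' + signed_sum L ?b R\<bar>)"
  proof -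
    have "(\<Sum>R\<in>Pow {..<L}. \<bar>c' + signed_sum L ?b R\<bar>) = (\<Sum>R\<in>Pow {..<L}. \<bar>c' + signed_sum L ?b ({..<L} - R)\<bar>)"
      using sum.reindex_bij_betw[OF bij, of "\<lambda>R. \<bar>c' + signed_sum L ?b R\<bar>"] by simp
    then show ?thesis by (simp add: comp)
  qed
  then have "2 * (\<Sum>R\<in>Pow {..<L}. \<bar>c' + signed_sum L ?b R\<bar>) = (\<Sum>R\<in>Pow {..<L}. \<bar>c' + signed_sum L ?b R\<bar> + \<bar>c' - signed_sum L ?b R\<bar>)"
    by (simp add: sum.distrib)
  also have "\<dots> \<ge> (\<Sum>R\<in>Pow {..<L}. 2 * \<bar>signed_sum L ?b R\<bar>)"
    by (intro sum_mono) linarith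
  finally show ?thesis unfolding eq by (simp add: sum_distrib_left[symmetric])
qed

section \<open>The switching bound for fixed relabellings\<close>

lemma pm1_cross_bounds:
  fixes x1 x2 x3 x4 :: real
  assumes "x1 = 1 \<or> x1 = -1" "x2 = 1 \<or> x2 = -1" "x3 = 1 \<or> x3 = -1" "x4 = 1 \<or> x4 = -1"
  shows "\<bar>x1 - x2 - x3 + x4\<bar> \<le> 4" "x1 - x2 - x3 + x4 \<noteq> 0 \<Longrightarrow> \<bar>x1 - x2 - x3 + x4\<bar> \<ge> 2"
  using assms by auto

lemma bool_cross_bounds:
  fixes y1 y2 y3 y4 :: real
  assumes "y1 = 0 \<or> y1 = 1" "y2 = 0 \<or> y2 = 1" "y3 = 0 \<or> y3 = 1" "y4 = 0 \<or> y4 = 1"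
  shows "y1 - y2 - y3 + y4 \<noteq> 0 \<Longrightarrow> \<bar>y1 - y2 - y3 + y4\<bar> \<ge> 1"
    and "(y1 - y2 - y3 + y4)^2 \<le> 2 * (\<bar>y1 - y2\<bar> + \<bar>y3 - y4\<bar>)"
  using assms by (auto simp: power2_eq_square)

lemma bool_diff_bounds:
  fixes x y :: real
  assumes "x = 0 \<or> x = 1" "y = 0 \<or> y = 1"
  shows "\<bar>x - y\<bar> \<le> x + y" "\<bar>x - y\<bar> \<le> (1 - x) + (1 - y)"
  using assms by auto

locale switching_setup =
  fixes n k L d :: nat and g A :: "nat \<Rightarrow> nat \<Rightarrow> real"
  assumes pairs_couples_le: "2 * k + 2 * L \<le> n"
    and g_sym: "\<And>x y. g x y = g y x"
    and g_pm1: "\<And>x y. x < n \<Longrightarrow> y < n \<Longrightarrow> x \<noteq> y \<Longrightarrow> g x y = 1 \<or> g x y = -1"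
    and A_sym: "\<And>x y. A x y = A y x"
    and A_self: "\<And>x. A x x = 0"
    and A_0_or_1: "\<And>x y. A x y = 0 \<or> A x y = 1"
    and A_row_sum: "\<And>a. a < n \<Longrightarrow> (\<Sum>z<n. A a z) = real d"
begin

text \<open>By couple_term_diff, adding l to R changes pair_coeff i by -2 cross_coeff i l.\<close>
definition cross_coeff :: "nat \<Rightarrow> nat \<Rightarrow> real" where
  "cross_coeff i l = cross_diff k g i l * cross_diff k A i l / 2"

lemma cross_coeff_power2_ge_1:
  assumes i: "i < k" and l: "l < L" and ne: "cross_diff k g i l \<noteq> 0" "cross_diff k A i l \<noteq> 0"
  shows "(cross_coeff i l)^2 \<ge> 1"
proof -
  have r: "2*i < n" "2*i+1 < n" "2*k+2*l < n" "2*k+2*l+1 < n" using i l pairs_couples_le by auto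
  have dd: "2*i \<noteq> 2*k+2*l" "2*i+1 \<noteq> 2*k+2*l" "2*i \<noteq> 2*k+2*l+1" "2*i+1 \<noteq> 2*k+2*l+1" using i by auto
  have A: "\<bar>cross_diff k g i l\<bar> \<ge> 2" unfolding cross_diff_def
    using ne(1) r dd by (intro pm1_cross_bounds(2) g_pm1) (auto simp: cross_diff_def)
  have P: "\<bar>cross_diff k A i l\<bar> \<ge> 1" unfolding cross_diff_def
    using ne(2) by (intro bool_cross_bounds(1) A_0_or_1) (auto simp: cross_diff_def)
  have "\<bar>cross_diff k g i l\<bar> * \<bar>cross_diff k A i l\<bar> \<ge> 2 * 1" by (rule mult_mono[OF A P]) auto
  then have h: "\<bar>cross_coeff i l\<bar> \<ge> 1" unfolding cross_coeff_def by (simp add: abs_mult)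
  have "1 ^ 2 \<le> \<bar>cross_coeff i l\<bar> ^ 2" by (rule power_mono[OF h]) simp
  then show ?thesis by simp
qed

lemma cross_coeff_power2_le:
  assumes i: "i < k" and l: "l < L"
  shows "(cross_coeff i l)^2 \<le> 8 * (\<bar>A (2*i) (2*k+2*l) - A (2*i+1) (2*k+2*l)\<bar> + \<bar>A (2*i) (2*k+2*l+1) - A (2*i+1) (2*k+2*l+1)\<bar>)"
proof -
  have r: "2*i < n" "2*i+1 < n" "2*k+2*l < n" "2*k+2*l+1 < n" using i l pairs_couples_le by auto
  have dd: "2*i \<noteq> 2*k+2*l" "2*i+1 \<noteq> 2*k+2*l" "2*i \<noteq> 2*k+2*l+1" "2*i+1 \<noteq> 2*k+2*l+1" using i by auto
  have a4: "\<bar>cross_diff k g i l\<bar> \<le> 4" unfolding cross_diff_def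
    using r dd by (intro pm1_cross_bounds(1) g_pm1) auto
  have "\<bar>cross_diff k g i l\<bar>^2 \<le> 4^2" by (rule power_mono[OF a4]) simp
  then have "(cross_diff k g i l)^2 \<le> 16" by simp
  moreover have "(cross_diff k A i l)^2 \<le> 2 * (\<bar>A (2*i) (2*k+2*l) - A (2*i+1) (2*k+2*l)\<bar> + \<bar>A (2*i) (2*k+2*l+1) - A (2*i+1) (2*k+2*l+1)\<bar>)"
    unfolding cross_diff_def by (intro bool_cross_bounds(2) A_0_or_1)
  ultimately have "(cross_diff k g i l)^2 * (cross_diff k A i l)^2 \<le> 16 * (2 * (\<bar>A (2*i) (2*k+2*l) - A (2*i+1) (2*k+2*l)\<bar> + \<bar>A (2*i) (2*k+2*l+1) - A (2*i+1) (2*k+2*l+1)\<bar>))"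
    by (intro mult_mono) auto
  then show ?thesis unfolding cross_coeff_def by (simp add: power_mult_distrib power_divide)
qed

lemma A_le_1: "A x y \<le> 1" using A_0_or_1[of x y] by auto

lemma sum_cross_coeff_power2_le_degree:
  assumes i: "i < k"
  shows "(\<Sum>l<L. (cross_coeff i l)^2) \<le> 16 * real d"
proof -
  let ?p = "\<lambda>z. \<bar>A (2*i) z - A (2*i+1) z\<bar>"
  have "(\<Sum>l<L. (cross_coeff i l)^2) \<le> (\<Sum>l<L. 8 * (?p (2*k+2*l) + ?p (2*k+2*l+1)))"
    by (intro sum_mono cross_coeff_power2_le[OF i]) auto
  also have "\<dots> = 8 * (\<Sum>z\<in>{2*k..<2*k+2*L}. ?p z)"
    by (simp add: sum_atLeastLessThan_double sum_distrib_left)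
  also have "(\<Sum>z\<in>{2*k..<2*k+2*L}. ?p z) \<le> (\<Sum>z<n. ?p z)"
    using pairs_couples_le by (intro sum_mono2) auto
  also have "\<dots> \<le> (\<Sum>z<n. A (2*i) z + A (2*i+1) z)"
    by (intro sum_mono bool_diff_bounds(1) A_0_or_1)
  also have "\<dots> = 2 * real d" using A_row_sum[of "2*i"] A_row_sum[of "2*i+1"] i pairs_couples_le by (simp add: sum.distrib)
  finally show ?thesis by simp
qed

lemma sum_cross_coeff_power2_le_codegree:
  assumes i: "i < k"
  shows "(\<Sum>l<L. (cross_coeff i l)^2) \<le> 16 * (real n - 1 - real d)"
proof -
  let ?p = "\<lambda>z. \<bar>A (2*i) z - A (2*i+1) z\<bar>"
  let ?q = "\<lambda>z. (1 - A (2*i) z) + (1 - A (2*i+1) z)"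
  have ir: "2*i < n" "2*i+1 < n" using i pairs_couples_le by auto
  have "(\<Sum>l<L. (cross_coeff i l)^2) \<le> (\<Sum>l<L. 8 * (?p (2*k+2*l) + ?p (2*k+2*l+1)))"
    by (intro sum_mono cross_coeff_power2_le[OF i]) auto
  also have "\<dots> = 8 * (\<Sum>z\<in>{2*k..<2*k+2*L}. ?p z)"
    by (simp add: sum_atLeastLessThan_double sum_distrib_left)
  also have "(\<Sum>z\<in>{2*k..<2*k+2*L}. ?p z) \<le> (\<Sum>z\<in>{2*k..<2*k+2*L}. ?q z)"
    by (intro sum_mono bool_diff_bounds(2) A_0_or_1)
  also have "\<dots> \<le> (\<Sum>z\<in>{..<n} - {2*i, 2*i+1}. ?q z)"
  proof (rule sum_mono2)
    show "{2*k..<2*k+2*L} \<subseteq> {..<n} - {2*i, 2*i+1}" using i pairs_couples_le by auto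
    show "\<And>b. b \<in> {..<n} - {2*i, 2*i+1} - {2*k..<2*k+2*L} \<Longrightarrow> 0 \<le> ?q b"
      using A_le_1 by (smt (verit))
  qed simp
  also have "(\<Sum>z\<in>{..<n} - {2*i, 2*i+1}. ?q z) = (\<Sum>z<n. ?q z) - (?q (2*i) + ?q (2*i+1))"
    using ir by (subst sum_diff) auto
  also have "(\<Sum>z<n. ?q z) = 2 * real n - 2 * real d"
  proof -
    have "(\<Sum>z<n. ?q z) = (real n - (\<Sum>z<n. A (2*i) z)) + (real n - (\<Sum>z<n. A (2*i+1) z))"
      by (simp only: sum.distrib sum_subtractf) simp
    then show ?thesis using A_row_sum[OF ir(1)] A_row_sum[OF ir(2)] by simp
  qed
  also have "?q (2*i) + ?q (2*i+1) = 4 - 2 * A (2*i) (2*i+1)"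
    using A_self[of "2*i"] A_self[of "2*i+1"] A_sym[of "2*i" "2*i+1"] by simp
  finally have "(\<Sum>l<L. (cross_coeff i l)^2) \<le> 8 * (2 * real n - 2 * real d - (4 - 2 * A (2*i) (2*i+1)))" by simp
  also have "\<dots> \<le> 16 * (real n - 1 - real d)" using A_le_1[of "2*i" "2*i+1"] by simp
  finally show ?thesis .
qed

lemma sum_abs_pair_coeff_ge_signed_sum:
  assumes i: "i < k"
  shows "(\<Sum>R\<in>Pow {..<L}. \<bar>signed_sum L (cross_coeff i) R\<bar>)
       \<le> (\<Sum>R\<in>Pow {..<L}. \<bar>pair_coeff n k g (couple_switched k L A R) i\<bar>)"
proof -
  let ?K = "couple_free_coeff n k L g A (2*i) + couple_free_coeff n k L g A (2*i+1)"
  let ?p = "\<lambda>l. couple_swapped_term k g A (2*i) l + couple_swapped_term k g A (2*i+1) l"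
  let ?q = "\<lambda>l. couple_kept_term k g A (2*i) l + couple_kept_term k g A (2*i+1) l"
  have "(?q l - ?p l) / 2 = cross_coeff i l" for l
    unfolding cross_coeff_def using couple_term_diff[of k g A i l] by simp
  then have "(\<Sum>R\<in>Pow {..<L}. \<bar>signed_sum L (cross_coeff i) R\<bar>)
      \<le> (\<Sum>R\<in>Pow {..<L}. \<bar>?K + (\<Sum>l<L. if l \<in> R then ?p l else ?q l)\<bar>)"
    using sum_abs_choice_ge_signed_sum[where c = ?K and p = ?p and q = ?q and L = L] by simp
  also have "\<dots> = (\<Sum>R\<in>Pow {..<L}. \<bar>pair_coeff n k g (couple_switched k L A R) i\<bar>)"
    using pair_coeff_couple_switched[OF pairs_couples_le i] by simp
  finally show ?thesis .
qed

lemma sum_abs_pair_coeff_ge_single: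
  assumes t: "t > 0" and tt: "32 * real d \<le> t^2 \<or> 32 * (real n - 1 - real d) \<le> t^2"
    and i: "i < k"
  shows "2^L * (3 / (4 * t)) * (\<Sum>l<L. if cross_diff k g i l \<noteq> 0 \<and> cross_diff k A i l \<noteq> 0 then 1 else 0)
       \<le> (\<Sum>R\<in>Pow {..<L}. \<bar>pair_coeff n k g (couple_switched k L A R) i\<bar>)"
proof -
  have "(\<Sum>l<L. if cross_diff k g i l \<noteq> 0 \<and> cross_diff k A i l \<noteq> 0 then 1 else 0)
      \<le> (\<Sum>l<L. (cross_coeff i l)^2)"
    by (intro sum_mono) (auto intro: cross_coeff_power2_ge_1[OF i])
  then have "2^L * (3 / (4 * t)) * (\<Sum>l<L. if cross_diff k g i l \<noteq> 0 \<and> cross_diff k A i l \<noteq> 0 then 1 else 0)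
      \<le> 2^L * (3 / (4 * t)) * (\<Sum>l<L. (cross_coeff i l)^2)"
    using t by (intro mult_left_mono) auto
  also have "\<dots> \<le> (\<Sum>R\<in>Pow {..<L}. \<bar>signed_sum L (cross_coeff i) R\<bar>)"
    using tt sum_cross_coeff_power2_le_degree[OF i] sum_cross_coeff_power2_le_codegree[OF i]
    by (intro sum_abs_signed_sum_ge[OF t]) linarith
  also have "\<dots> \<le> (\<Sum>R\<in>Pow {..<L}. \<bar>pair_coeff n k g (couple_switched k L A R) i\<bar>)"
    by (rule sum_abs_pair_coeff_ge_signed_sum[OF i])
  finally show ?thesis .
qed

lemma sum_abs_pair_coeff_ge:
  assumes t: "t > 0" and tt: "32 * real d \<le> t^2 \<or> 32 * (real n - 1 - real d) \<le> t^2"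
  shows "2^L * (3 / (4 * t)) * (\<Sum>i<k. \<Sum>l<L. if cross_diff k g i l \<noteq> 0 \<and> cross_diff k A i l \<noteq> 0 then 1 else 0)
       \<le> (\<Sum>R\<in>Pow {..<L}. \<Sum>i<k. \<bar>pair_coeff n k g (couple_switched k L A R) i\<bar>)"
proof -
  have "2^L * (3 / (4 * t)) * (\<Sum>i<k. \<Sum>l<L. if cross_diff k g i l \<noteq> 0 \<and> cross_diff k A i l \<noteq> 0 then 1 else 0)
      = (\<Sum>i<k. 2^L * (3 / (4 * t)) * (\<Sum>l<L. if cross_diff k g i l \<noteq> 0 \<and> cross_diff k A i l \<noteq> 0 then 1 else 0))"
    by (simp add: sum_distrib_left)
  also have "\<dots> \<le> (\<Sum>i<k. \<Sum>R\<in>Pow {..<L}. \<bar>pair_coeff n k g (couple_switched k L A R) i\<bar>)"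
    by (intro sum_mono sum_abs_pair_coeff_ge_single[OF t tt]) auto
  also have "\<dots> = (\<Sum>R\<in>Pow {..<L}. \<Sum>i<k. \<bar>pair_coeff n k g (couple_switched k L A R) i\<bar>)"
    by (rule sum.swap)
  finally show ?thesis .
qed

end

section \<open>Averaging over relabellings\<close>

definition relabel :: "(nat \<Rightarrow> nat) \<Rightarrow> (nat \<Rightarrow> nat \<Rightarrow> real) \<Rightarrow> nat \<Rightarrow> nat \<Rightarrow> real" where
  "relabel \<pi> h x y = h (\<pi> x) (\<pi> y)"

definition list_cross_diff :: "(nat \<Rightarrow> nat \<Rightarrow> real) \<Rightarrow> nat list \<Rightarrow> real" where
  "list_cross_diff h ys = h (ys!0) (ys!2) - h (ys!1) (ys!2) - h (ys!0) (ys!3) + h (ys!1) (ys!3)"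

definition cross_count :: "nat \<Rightarrow> (nat \<Rightarrow> nat \<Rightarrow> real) \<Rightarrow> real" where
  "cross_count n h = (\<Sum>ys\<in>distinct_lists 4 {..<n}. if list_cross_diff h ys \<noteq> 0 then 1 else 0)"

lemma cross_count_nonneg: "0 \<le> cross_count n h"
  unfolding cross_count_def by (simp add: sum_nonneg)

lemma cross_diff_relabel:
  "cross_diff k (relabel \<pi> h) i l = list_cross_diff h (map \<pi> [2*i, 2*i+1, 2*k+2*l, 2*k+2*l+1])"
  by (simp add: cross_diff_def list_cross_diff_def relabel_def)

lemma colour_pm1:
  assumes "\<forall>e\<in>Kn_edges n. f e = 1 \<or> f e = -1" "x < n" "y < n" "x \<noteq> y"
  shows "colour f x y = 1 \<or> colour f x y = -1"
proof -
  have "{x, y} \<in> Kn_edges n" using assms(2-4) by (auto simp: Kn_edges_def)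
  then show ?thesis using assms(1) by (auto simp: colour_def)
qed

lemma switching_setup_relabel:
  assumes G: "graph_on n F" and R: "regular n F d"
    and f_pm1: "\<forall>e\<in>Kn_edges n. f e = 1 \<or> f e = -1"
    and kL: "2 * k + 2 * L \<le> n" and \<rho>: "\<rho> permutes {..<n}" and \<beta>: "\<beta> permutes {..<n}"
  shows "switching_setup n k L d (relabel \<beta> (colour f)) (relabel \<rho> (adj F))"
proof
  show "relabel \<beta> (colour f) x y = 1 \<or> relabel \<beta> (colour f) x y = -1" if "x < n" "y < n" "x \<noteq> y" for x y
  proof -
    have "\<beta> x < n" "\<beta> y < n" "\<beta> x \<noteq> \<beta> y"
      using that permutes_in_image[OF \<beta>] permutes_inj[OF \<beta>] by (auto dest: injD)
    then show ?thesis using colour_pm1[OF f_pm1] by (simp add: relabel_def)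
  qed
  show "(\<Sum>z<n. relabel \<rho> (adj F) a z) = real d" if "a < n" for a
    using sum.permute[OF \<rho>, of "adj F (\<rho> a)"] sum_adj_regular[OF G R] that permutes_in_image[OF \<rho>]
    by (simp add: relabel_def o_def)
qed (use kL adj_self[OF G] adj_0_or_1 in \<open>auto simp: relabel_def colour_sym adj_sym\<close>)

lemma sum_square_permute:
  fixes h :: "nat \<Rightarrow> nat \<Rightarrow> real"
  assumes p: "p permutes {..<n}"
  shows "(\<Sum>a<n. \<Sum>z<n. h (p a) (p z)) = (\<Sum>u<n. \<Sum>v<n. h u v)"
  using sum.permute[OF p, of "\<lambda>u. \<Sum>z<n. h u (p z)"] sum.permute[OF p, of "h _"]
  by (simp add: o_def)

lemma pair_switched_sum_relabel:
  fixes S R :: "nat set"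
  assumes G: "graph_on n F" and kL: "2 * k + 2 * L \<le> n"
    and \<rho>: "\<rho> permutes {..<n}" and \<beta>: "\<beta> permutes {..<n}"
  defines "\<sigma> \<equiv> \<beta> \<circ> swap_pairs k S \<circ> swap_couples k L R \<circ> inv \<rho>"
  shows "\<sigma> permutes {..<n}"
    and "pair_switched_sum n k (relabel \<beta> (colour f)) (couple_switched k L (relabel \<rho> (adj F)) R) S
           = 2 * (\<Sum>e\<in>F. real_of_int (f (\<sigma> ` e)))"
proof -
  have sw: "swap_pairs k S permutes {..<n}" using kL by (intro swap_pairs_permutes) simp
  have cw: "swap_couples k L R permutes {..<n}" using kL by (rule swap_couples_permutes)
  show "\<sigma> permutes {..<n}" unfolding \<sigma>_def
    by (intro permutes_compose permutes_inv \<rho> \<beta> sw cw)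
  have \<sigma>\<rho>: "\<sigma> (\<rho> a) = \<beta> (swap_pairs k S (swap_couples k L R a))" for a
    unfolding \<sigma>_def by (simp add: permutes_inverses(2)[OF \<rho>])
  have "2 * (\<Sum>e\<in>F. real_of_int (f (\<sigma> ` e))) = (\<Sum>u<n. \<Sum>v<n. adj F u v * colour f (\<sigma> u) (\<sigma> v))"
    using sum_edges_eq_sum_adj[OF G, of "\<lambda>e. real_of_int (f (\<sigma> ` e))"] by (simp add: colour_def)
  also have "\<dots> = (\<Sum>a<n. \<Sum>z<n. adj F (\<rho> a) (\<rho> z) * colour f (\<sigma> (\<rho> a)) (\<sigma> (\<rho> z)))"
    by (rule sum_square_permute[OF \<rho>, symmetric])
  also have "\<dots> = (\<Sum>a<n. \<Sum>z<n. relabel \<rho> (adj F) a z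
      * relabel \<beta> (colour f) (swap_pairs k S (swap_couples k L R a)) (swap_pairs k S (swap_couples k L R z)))"
    by (simp add: \<sigma>\<rho> relabel_def)
  also have "\<dots> = (\<Sum>a<n. \<Sum>z<n. relabel \<rho> (adj F) (swap_couples k L R a) (swap_couples k L R z)
      * relabel \<beta> (colour f) (swap_pairs k S a) (swap_pairs k S z))"
    using sum_square_permute[OF cw, of "\<lambda>a z. relabel \<rho> (adj F) a z
      * relabel \<beta> (colour f) (swap_pairs k S (swap_couples k L R a)) (swap_pairs k S (swap_couples k L R z))"]
    by simp
  finally show "pair_switched_sum n k (relabel \<beta> (colour f)) (couple_switched k L (relabel \<rho> (adj F)) R) S
      = 2 * (\<Sum>e\<in>F. real_of_int (f (\<sigma> ` e)))"
    by (simp add: pair_switched_sum_def couple_switched_def)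
qed

lemma sum_permutes_cross_indicator:
  assumes il: "i < k" "l < L" and kL: "2 * k + 2 * L \<le> n"
  shows "(\<Sum>\<rho>\<in>{\<sigma>. \<sigma> permutes {..<n}}. \<Sum>\<beta>\<in>{\<sigma>. \<sigma> permutes {..<n}}.
            if cross_diff k (relabel \<beta> g) i l \<noteq> 0 \<and> cross_diff k (relabel \<rho> h) i l \<noteq> 0 then 1 else 0)
       = fact (n - 4)^2 * cross_count n g * cross_count n h"
proof -
  let ?P = "{\<sigma>. \<sigma> permutes {..<n}}"
  let ?xs = "[2*i, 2*i+1, 2*k+2*l, 2*k+2*l+1]"
  have xs: "set ?xs \<subseteq> {..<n}" "distinct ?xs" using il kL by auto
  have count: "(\<Sum>\<pi>\<in>?P. if list_cross_diff h' (map \<pi> ?xs) \<noteq> 0 then 1 else 0) = fact (n - 4) * cross_count n h'"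
    for h'
    using sum_permutes_map_list[OF _ xs, of "\<lambda>ys. if list_cross_diff h' ys \<noteq> 0 then 1 else 0"]
    by (simp add: cross_count_def eval_nat_numeral)
  have "(\<Sum>\<rho>\<in>?P. \<Sum>\<beta>\<in>?P.
          if cross_diff k (relabel \<beta> g) i l \<noteq> 0 \<and> cross_diff k (relabel \<rho> h) i l \<noteq> 0 then 1 else 0)
      = (\<Sum>\<rho>\<in>?P. \<Sum>\<beta>\<in>?P. (if list_cross_diff h (map \<rho> ?xs) \<noteq> 0 then 1 else 0)
                          * (if list_cross_diff g (map \<beta> ?xs) \<noteq> 0 then 1 else (0::real)))"
    by (intro sum.cong refl) (simp add: cross_diff_relabel)
  also have "\<dots> = (\<Sum>\<rho>\<in>?P. if list_cross_diff h (map \<rho> ?xs) \<noteq> 0 then 1 else 0)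
                  * (\<Sum>\<beta>\<in>?P. if list_cross_diff g (map \<beta> ?xs) \<noteq> 0 then 1 else 0)"
    by (simp only: sum_product)
  also have "\<dots> = fact (n - 4) * cross_count n h * (fact (n - 4) * cross_count n g)"
    by (simp only: count)
  finally show ?thesis by (simp add: power2_eq_square)
qed

lemma sum_relabellings_pair_coeff_ge:
  fixes t :: real
  assumes G: "graph_on n F" and R: "regular n F d"
    and f_pm1: "\<forall>e\<in>Kn_edges n. f e = 1 \<or> f e = -1" and kL: "2 * k + 2 * L \<le> n"
    and t: "t > 0" and tt: "32 * real d \<le> t^2 \<or> 32 * (real n - 1 - real d) \<le> t^2"
  shows "2^L * (3 / (4 * t) * real k * real L * fact (n - 4)^2 * cross_count n (colour f) * cross_count n (adj F))
    \<le> (\<Sum>\<rho>\<in>{\<sigma>. \<sigma> permutes {..<n}}. \<Sum>\<beta>\<in>{\<sigma>. \<sigma> permutes {..<n}}. \<Sum>R\<in>Pow {..<L}.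
          \<Sum>i<k. \<bar>pair_coeff n k (relabel \<beta> (colour f)) (couple_switched k L (relabel \<rho> (adj F)) R) i\<bar>)"
proof -
  let ?P = "{\<sigma>. \<sigma> permutes {..<n}}"
  let ?I = "\<lambda>\<rho> \<beta> i l. if cross_diff k (relabel \<beta> (colour f)) i l \<noteq> 0 \<and> cross_diff k (relabel \<rho> (adj F)) i l \<noteq> 0
                       then 1 else (0::real)"
  have "2^L * (3 / (4 * t) * real k * real L * fact (n - 4)^2 * cross_count n (colour f) * cross_count n (adj F))
      = 2^L * (3 / (4 * t)) * (\<Sum>i<k. \<Sum>l<L. \<Sum>\<rho>\<in>?P. \<Sum>\<beta>\<in>?P. ?I \<rho> \<beta> i l)"
    using sum_permutes_cross_indicator[OF _ _ kL] by simp
  also have "(\<Sum>i<k. \<Sum>l<L. \<Sum>\<rho>\<in>?P. \<Sum>\<beta>\<in>?P. ?I \<rho> \<beta> i l) = (\<Sum>\<rho>\<in>?P. \<Sum>\<beta>\<in>?P. \<Sum>i<k. \<Sum>l<L. ?I \<rho> \<beta> i l)"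
    by (subst (2) sum.swap, subst sum.swap, simp only: sum.swap[of _ "{..<L}"])
  also have "2^L * (3 / (4 * t)) * \<dots> = (\<Sum>\<rho>\<in>?P. \<Sum>\<beta>\<in>?P. 2^L * (3 / (4 * t)) * (\<Sum>i<k. \<Sum>l<L. ?I \<rho> \<beta> i l))"
    by (simp only: sum_distrib_left)
  also have "\<dots> \<le> (\<Sum>\<rho>\<in>?P. \<Sum>\<beta>\<in>?P. \<Sum>R\<in>Pow {..<L}.
      \<Sum>i<k. \<bar>pair_coeff n k (relabel \<beta> (colour f)) (couple_switched k L (relabel \<rho> (adj F)) R) i\<bar>)"
  proof (intro sum_mono)
    fix \<rho> \<beta> assume "\<rho> \<in> ?P" "\<beta> \<in> ?P"
    then interpret switching_setup n k L d "relabel \<beta> (colour f)" "relabel \<rho> (adj F)"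
      by (intro switching_setup_relabel[OF G R f_pm1 kL]) auto
    show "2^L * (3 / (4 * t)) * (\<Sum>i<k. \<Sum>l<L. ?I \<rho> \<beta> i l) \<le> (\<Sum>R\<in>Pow {..<L}.
      \<Sum>i<k. \<bar>pair_coeff n k (relabel \<beta> (colour f)) (couple_switched k L (relabel \<rho> (adj F)) R) i\<bar>)"
      by (rule sum_abs_pair_coeff_ge[OF t tt])
  qed
  finally show ?thesis .
qed

lemma exists_relabelling_ge:
  fixes t :: real
  assumes G: "graph_on n F" and R: "regular n F d"
    and f_pm1: "\<forall>e\<in>Kn_edges n. f e = 1 \<or> f e = -1" and kL: "2 * k + 2 * L \<le> n"
    and t: "t > 0" and tt: "32 * real d \<le> t^2 \<or> 32 * (real n - 1 - real d) \<le> t^2"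
  shows "\<exists>\<rho> \<beta> R. \<rho> permutes {..<n} \<and> \<beta> permutes {..<n} \<and>
     3 / (4 * t) * real k * real L * fact (n - 4)^2 * cross_count n (colour f) * cross_count n (adj F)
     \<le> fact n ^ 2 * (\<Sum>i<k. \<bar>pair_coeff n k (relabel \<beta> (colour f)) (couple_switched k L (relabel \<rho> (adj F)) R) i\<bar>)"
proof -
  let ?P = "{\<sigma>. \<sigma> permutes {..<n}}" and ?Q = "Pow {..<L}"
  let ?Y = "\<lambda>\<rho> \<beta> R. \<Sum>i<k. \<bar>pair_coeff n k (relabel \<beta> (colour f)) (couple_switched k L (relabel \<rho> (adj F)) R) i\<bar>"
  let ?c = "3 / (4 * t) * real k * real L * fact (n - 4)^2 * cross_count n (colour f) * cross_count n (adj F)"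
  have total: "2^L * ?c \<le> (\<Sum>(\<rho>, \<beta>, R)\<in>?P \<times> ?P \<times> ?Q. ?Y \<rho> \<beta> R)"
    using sum_relabellings_pair_coeff_ge[OF G R f_pm1 kL t tt] by (simp add: sum.cartesian_product')
  have "?P \<times> ?P \<times> ?Q \<noteq> {}" using permutes_id by blast
  then obtain \<rho> \<beta> R where \<rho>\<beta>R: "(\<rho>, \<beta>, R) \<in> ?P \<times> ?P \<times> ?Q"
    and avg: "(\<Sum>(\<rho>, \<beta>, R)\<in>?P \<times> ?P \<times> ?Q. ?Y \<rho> \<beta> R) \<le> ?Y \<rho> \<beta> R * real (card (?P \<times> ?P \<times> ?Q))"
    using exists_ge_average[of "?P \<times> ?P \<times> ?Q" "\<lambda>(\<rho>, \<beta>, R). ?Y \<rho> \<beta> R"] finite_permutations[of "{..<n}"]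
    by fastforce
  have "real (card (?P \<times> ?P \<times> ?Q)) = 2^L * fact n ^ 2"
    using card_permutations[of "{..<n}" n] by (simp add: card_cartesian_product card_Pow power2_eq_square)
  then have "2^L * ?c \<le> 2^L * (fact n ^ 2 * ?Y \<rho> \<beta> R)"
    using total avg by (simp add: algebra_simps)
  then have "?c \<le> fact n ^ 2 * ?Y \<rho> \<beta> R"
    by (rule mult_left_le_imp_le) simp
  then show ?thesis using \<rho>\<beta>R by blast
qed

lemma exists_copy_ge_cross_counts:
  fixes t :: real
  assumes G: "graph_on n F" and R: "regular n F d"
    and f_pm1: "\<forall>e\<in>Kn_edges n. f e = 1 \<or> f e = -1" and kL: "2 * k + 2 * L \<le> n"
    and t: "t > 0" and tt: "32 * real d \<le> t^2 \<or> 32 * (real n - 1 - real d) \<le> t^2"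
  shows "\<exists>H. is_copy n F H \<and>
     3 / (4 * t) * real k * real L * fact (n - 4)^2 * cross_count n (colour f) * cross_count n (adj F)
     \<le> 2 * fact n ^ 2 * real_of_int (discrepancy f H)"
proof -
  obtain \<rho> \<beta> R where \<rho>: "\<rho> permutes {..<n}" and \<beta>: "\<beta> permutes {..<n}"
    and ge: "3 / (4 * t) * real k * real L * fact (n - 4)^2 * cross_count n (colour f) * cross_count n (adj F)
     \<le> fact n ^ 2 * (\<Sum>i<k. \<bar>pair_coeff n k (relabel \<beta> (colour f)) (couple_switched k L (relabel \<rho> (adj F)) R) i\<bar>)"
    using exists_relabelling_ge[OF G R f_pm1 kL t tt] by blast
  interpret switching_setup n k L d "relabel \<beta> (colour f)" "relabel \<rho> (adj F)"
    by (rule switching_setup_relabel[OF G R f_pm1 kL \<rho> \<beta>])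
  obtain S where S: "(\<Sum>i<k. \<bar>pair_coeff n k (relabel \<beta> (colour f)) (couple_switched k L (relabel \<rho> (adj F)) R) i\<bar>)
      \<le> \<bar>pair_switched_sum n k (relabel \<beta> (colour f)) (couple_switched k L (relabel \<rho> (adj F)) R) S\<bar>"
    using exists_pair_switch_ge[of "relabel \<beta> (colour f)" "couple_switched k L (relabel \<rho> (adj F)) R" k n]
      pairs_couples_le by (auto simp: couple_switched_def A_sym A_self g_sym)
  define \<sigma> where "\<sigma> = \<beta> \<circ> swap_pairs k S \<circ> swap_couples k L R \<circ> inv \<rho>"
  have \<sigma>: "\<sigma> permutes {..<n}" unfolding \<sigma>_def by (rule pair_switched_sum_relabel(1)[OF G kL \<rho> \<beta>])
  have "pair_switched_sum n k (relabel \<beta> (colour f)) (couple_switched k L (relabel \<rho> (adj F)) R) S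
      = 2 * (\<Sum>e\<in>F. real_of_int (f (\<sigma> ` e)))"
    unfolding \<sigma>_def by (rule pair_switched_sum_relabel(2)[OF G kL \<rho> \<beta>])
  then have "\<bar>pair_switched_sum n k (relabel \<beta> (colour f)) (couple_switched k L (relabel \<rho> (adj F)) R) S\<bar>
      = 2 * real_of_int (discrepancy f ((\<lambda>e. \<sigma> ` e) ` F))"
    unfolding discrepancy_permutes_image[OF \<sigma>] by (simp add: abs_mult)
  then show ?thesis
    using is_copy_permutes_image[OF \<sigma>] order_trans[OF ge mult_left_mono[OF S, of "fact n ^ 2"]]
    by (intro exI[of _ "(\<lambda>e. \<sigma> ` e) ` F"]) simp
qed

lemma cross_count_expand:
  "cross_count n h = (\<Sum>a<n. \<Sum>b\<in>{..<n}-{a}. \<Sum>c\<in>{..<n}-{a}-{b}. \<Sum>e\<in>{..<n}-{a}-{b}-{c}.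
      if h a c - h b c \<noteq> h a e - h b e then 1 else 0)"
  unfolding cross_count_def by (simp add: sum_distinct_lists_4 list_cross_diff_def algebra_simps)

section \<open>Alternating 4-tuples of a regular graph\<close>

lemma sum_sum_diff_power2:
  fixes x :: "'a \<Rightarrow> real"
  assumes "finite W"
  shows "(\<Sum>c\<in>W. \<Sum>e\<in>W. (x c - x e)^2) = 2 * real (card W) * (\<Sum>c\<in>W. (x c)^2) - 2 * (\<Sum>c\<in>W. x c)^2"
proof -
  have "(\<Sum>c\<in>W. \<Sum>e\<in>W. (x c - x e)^2)
      = (\<Sum>c\<in>W. \<Sum>e\<in>W. (x c)^2) + (\<Sum>c\<in>W. \<Sum>e\<in>W. (x e)^2) - 2 * (\<Sum>c\<in>W. \<Sum>e\<in>W. x c * x e)"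
    by (simp add: power2_diff sum.distrib sum_subtractf sum_distrib_left mult.assoc)
  moreover have "(\<Sum>c\<in>W. \<Sum>e\<in>W. x c * x e) = (\<Sum>c\<in>W. x c)^2"
    by (simp add: power2_eq_square sum_product)
  ultimately show ?thesis by (simp add: sum_distrib_left[symmetric])
qed

lemma sum_indicator_neq_ge:
  fixes x :: "'a \<Rightarrow> real"
  assumes W: "finite W" and bounded: "\<And>c e. \<bar>x c - x e\<bar> \<le> 2" and balanced: "(\<Sum>c\<in>W. x c) = 0"
  shows "real (card W) / 2 * (\<Sum>c\<in>W. (x c)^2) \<le> (\<Sum>c\<in>W. \<Sum>e\<in>W-{c}. if x c \<noteq> x e then 1 else 0)"
proof -
  have ind: "(x c - x e)^2 / 4 \<le> (if x c \<noteq> x e then 1 else 0)" for c e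
  proof -
    have "(x c - x e)^2 \<le> 2^2" using power_mono[OF bounded[of c e], of 2] by simp
    then show ?thesis by auto
  qed
  have "real (card W) / 2 * (\<Sum>c\<in>W. (x c)^2) = (\<Sum>c\<in>W. \<Sum>e\<in>W. (x c - x e)^2 / 4)"
    using sum_sum_diff_power2[OF W, of x] balanced by (simp add: sum_divide_distrib[symmetric])
  also have "\<dots> = (\<Sum>c\<in>W. \<Sum>e\<in>W-{c}. (x c - x e)^2 / 4)"
    using W by (intro sum.cong[OF refl]) (simp add: sum_diff1)
  also have "\<dots> \<le> (\<Sum>c\<in>W. \<Sum>e\<in>W-{c}. if x c \<noteq> x e then 1 else 0)"
    by (intro sum_mono ind)
  finally show ?thesis .
qed

lemma sum_adj_diff_power2:
  assumes G: "graph_on n F" and R: "regular n F d"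
  shows "(\<Sum>a<n. \<Sum>b<n. \<Sum>c<n. (adj F a c - adj F b c)^2) = 2 * real n * real d * (real n - real d)"
proof -
  have col: "(\<Sum>a<n. adj F a c) = real d" "(\<Sum>a<n. (adj F a c)^2) = real d" if "c < n" for c
  proof -
    show "(\<Sum>a<n. adj F a c) = real d" using sum_adj_regular[OF G R that] by (simp add: adj_sym)
    moreover have "(adj F a c)^2 = adj F a c" for a using adj_0_or_1[of F a c] by auto
    ultimately show "(\<Sum>a<n. (adj F a c)^2) = real d" by simp
  qed
  have "(\<Sum>a<n. \<Sum>b<n. \<Sum>c<n. (adj F a c - adj F b c)^2) = (\<Sum>c<n. \<Sum>a<n. \<Sum>b<n. (adj F a c - adj F b c)^2)"
    by (rule sum_rotate3)
  also have "\<dots> = (\<Sum>c<n. 2 * real n * real d - 2 * (real d)^2)"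
    using sum_sum_diff_power2[of "{..<n}" "\<lambda>a. adj F a _"] col by simp
  finally show ?thesis by (simp add: power2_eq_square algebra_simps)
qed

lemma sum_adj_diff_outside_pair:
  assumes G: "graph_on n F" and R: "regular n F d" and ab: "a < n" "b < n" "a \<noteq> b"
  shows "(\<Sum>c\<in>{..<n}-{a}-{b}. adj F a c - adj F b c) = 0"
    and "(\<Sum>c\<in>{..<n}-{a}-{b}. (adj F a c - adj F b c)^2) = (\<Sum>c<n. (adj F a c - adj F b c)^2) - 2 * adj F a b"
proof -
  have drop2: "(\<Sum>c\<in>{..<n}-{a}-{b}. h c) = (\<Sum>c<n. h c) - h a - h b" for h :: "nat \<Rightarrow> real"
    using ab by (simp add: sum_diff1)
  show "(\<Sum>c\<in>{..<n}-{a}-{b}. adj F a c - adj F b c) = 0"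
    unfolding drop2 using sum_adj_regular[OF G R] ab adj_self[OF G] adj_sym[of F a b]
    by (simp add: sum_subtractf)
  have "(adj F a a - adj F b a)^2 = adj F a b" "(adj F a b - adj F b b)^2 = adj F a b"
    using adj_self[OF G] adj_0_or_1[of F a b] adj_sym[of F a b] by (auto simp: power2_eq_square)
  then show "(\<Sum>c\<in>{..<n}-{a}-{b}. (adj F a c - adj F b c)^2) = (\<Sum>c<n. (adj F a c - adj F b c)^2) - 2 * adj F a b"
    unfolding drop2 by simp
qed

lemma cross_count_adj_ge:
  assumes G: "graph_on n F" and R: "regular n F d" and n2: "2 \<le> n"
  shows "real n * (real n - 2) * real d * (real n - 1 - real d) \<le> cross_count n (adj F)"
proof -
  let ?x = "\<lambda>a b c. adj F a c - adj F b c"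
  have "(real n - 2) / 2 * (\<Sum>c\<in>{..<n}-{a}-{b}. (?x a b c)^2)
      \<le> (\<Sum>c\<in>{..<n}-{a}-{b}. \<Sum>e\<in>{..<n}-{a}-{b}-{c}. if ?x a b c \<noteq> ?x a b e then 1 else 0)"
    if ab: "a < n" "b \<in> {..<n} - {a}" for a b
  proof -
    have "real (card ({..<n}-{a}-{b})) = real n - 2" using ab n2 by (simp add: card_Diff_singleton_if)
    moreover have "\<bar>?x a b c - ?x a b e\<bar> \<le> 2" for c e
      using adj_0_or_1[of F a c] adj_0_or_1[of F b c] adj_0_or_1[of F a e] adj_0_or_1[of F b e] by auto
    ultimately show ?thesis
      using sum_indicator_neq_ge[of "{..<n}-{a}-{b}" "?x a b"] sum_adj_diff_outside_pair(1)[OF G R] ab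
      by simp
  qed
  then have "(\<Sum>a<n. \<Sum>b\<in>{..<n}-{a}. (real n - 2) / 2 * (\<Sum>c\<in>{..<n}-{a}-{b}. (?x a b c)^2))
      \<le> cross_count n (adj F)"
    unfolding cross_count_expand by (intro sum_mono) auto
  then have "(real n - 2) / 2 * (\<Sum>a<n. \<Sum>b\<in>{..<n}-{a}. \<Sum>c\<in>{..<n}-{a}-{b}. (?x a b c)^2)
      \<le> cross_count n (adj F)"
    by (simp add: sum_distrib_left)
  also have "(\<Sum>a<n. \<Sum>b\<in>{..<n}-{a}. \<Sum>c\<in>{..<n}-{a}-{b}. (?x a b c)^2)
      = (\<Sum>a<n. \<Sum>b<n. (\<Sum>c<n. (?x a b c)^2) - 2 * adj F a b)"
  proof (rule sum.cong[OF refl])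
    fix a assume a: "a \<in> {..<n}"
    then have "(\<Sum>b\<in>{..<n}-{a}. \<Sum>c\<in>{..<n}-{a}-{b}. (?x a b c)^2)
        = (\<Sum>b\<in>{..<n}-{a}. (\<Sum>c<n. (?x a b c)^2) - 2 * adj F a b)"
      using sum_adj_diff_outside_pair(2)[OF G R] by (intro sum.cong) auto
    also have "\<dots> = (\<Sum>b<n. (\<Sum>c<n. (?x a b c)^2) - 2 * adj F a b)"
      using a adj_self[OF G, of a] by (simp add: sum_diff1)
    finally show "(\<Sum>b\<in>{..<n}-{a}. \<Sum>c\<in>{..<n}-{a}-{b}. (?x a b c)^2)
        = (\<Sum>b<n. (\<Sum>c<n. (?x a b c)^2) - 2 * adj F a b)" .
  qed
  also have "\<dots> = 2 * real n * real d * (real n - 1 - real d)"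
    using sum_adj_diff_power2[OF G R] sum_adj_regular[OF G R]
    by (simp add: sum_subtractf sum_distrib_left[symmetric] algebra_simps)
  finally show ?thesis by (simp add: field_simps)
qed

section \<open>Alternating 4-tuples of a balanced colouring\<close>

definition red_degree :: "nat \<Rightarrow> (nat set \<Rightarrow> int) \<Rightarrow> nat \<Rightarrow> real" where
  "red_degree n f c = real (card {a\<in>{..<n}. a \<noteq> c \<and> f {a, c} = 1})"

definition blue_degree :: "nat \<Rightarrow> (nat set \<Rightarrow> int) \<Rightarrow> nat \<Rightarrow> real" where
  "blue_degree n f c = real (card {a\<in>{..<n}. a \<noteq> c \<and> f {a, c} = -1})"

definition colour_gap :: "(nat set \<Rightarrow> int) \<Rightarrow> nat \<Rightarrow> nat \<Rightarrow> nat \<Rightarrow> real" where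
  "colour_gap f a b c = colour f a c - colour f b c"

definition gap_count :: "nat \<Rightarrow> (nat set \<Rightarrow> int) \<Rightarrow> nat \<Rightarrow> nat \<Rightarrow> real \<Rightarrow> real" where
  "gap_count n f a b v = real (card {c\<in>{..<n} - {a} - {b}. colour_gap f a b c = v})"

text \<open>Twice gap_pairs n f a b is the number of alternating 4-tuples starting with a, b.\<close>
definition gap_pairs :: "nat \<Rightarrow> (nat set \<Rightarrow> int) \<Rightarrow> nat \<Rightarrow> nat \<Rightarrow> real" where
  "gap_pairs n f a b = gap_count n f a b 0 * gap_count n f a b 2 + gap_count n f a b 0 * gap_count n f a b (-2)
     + gap_count n f a b 2 * gap_count n f a b (-2)"

lemma sum_indicator_eq_card:
  assumes "finite A"
  shows "(\<Sum>x\<in>A. if P x then 1 else (0::real)) = real (card {x\<in>A. P x})"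
  using sum.inter_filter[OF assms, of "\<lambda>_. (1::real)" P] by simp

lemma le_pair_products:
  fixes Z P M m :: real
  assumes "Z \<ge> 0" "P \<ge> 0" "M \<ge> 0" "Z + P + M = m" "m > 0"
  shows "P * m \<le> 2 * (Z * P + Z * M + P * M) \<or> (Z + M) * m \<le> 2 * (Z * P + Z * M + P * M)"
proof (cases "Z + M \<ge> m / 2")
  case True
  have "P * m \<le> P * (2 * (Z + M))" using True assms by (intro mult_left_mono) auto
  also have "\<dots> \<le> 2 * (Z * P + Z * M + P * M)" using assms by (simp add: algebra_simps)
  finally show ?thesis by simp
next
  case False
  then have "P \<ge> m / 2" using assms by linarith
  then have "(Z + M) * m \<le> (Z + M) * (2 * P)" using assms by (intro mult_left_mono) auto
  also have "\<dots> \<le> 2 * (Z * P + Z * M + P * M)" using assms by (simp add: algebra_simps)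
  finally show ?thesis by simp
qed

lemma card_not_low_le:
  fixes R B :: "nat \<Rightarrow> real" and lp mu :: real and n :: nat
  defines "Low_B \<equiv> {c\<in>{..<n}. B c \<le> lp * real n}" and "Low_R \<equiv> {c\<in>{..<n}. R c \<le> lp * real n}"
  assumes lp: "lp \<ge> 0" and n1: "n \<ge> 1"
    and ge: "card Low_R \<le> card Low_B"
    and prod: "real (card Low_B) * real (card Low_R) \<le> lp * real n * real n"
    and mix: "real (card ({..<n} - Low_B - Low_R)) \<le> mu * real n"
    and mu: "mu \<le> 1/2"
  shows "real (card ({..<n} - Low_B)) \<le> (4 * lp + mu) * real n"
proof -
  have fin: "finite Low_B" "finite Low_R" by (simp_all add: Low_B_def Low_R_def)
  let ?M = "{..<n} - Low_B - Low_R"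
  have "n = card {..<n}" by simp
  also have "\<dots> \<le> card (Low_B \<union> Low_R \<union> ?M)" by (rule card_mono) (use fin in auto)
  also have "\<dots> \<le> card Low_B + card Low_R + card ?M"
    using card_Un_le[of "Low_B \<union> Low_R" ?M] card_Un_le[of Low_B Low_R] by linarith
  finally have "n \<le> card Low_B + card Low_R + card ?M" .
  then have "real n / 4 \<le> real (card Low_B)"
    using ge mix mult_right_mono[OF mu, of "real n"] by linarith
  then have "real (card Low_R) * (real n / 4) \<le> real (card Low_R) * real (card Low_B)"
    by (rule mult_left_mono) simp
  also have "\<dots> \<le> lp * real n * real n" using prod by (simp only: mult.commute)
  also have "\<dots> = (4 * lp * real n) * (real n / 4)" by simp
  finally have "real (card Low_R) \<le> 4 * lp * real n"
    by (rule mult_right_le_imp_le) (use n1 in simp)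
  moreover have "card ({..<n} - Low_B) \<le> card (Low_R \<union> ?M)" by (rule card_mono) (use fin in auto)
  then have "real (card ({..<n} - Low_B)) \<le> real (card Low_R) + real (card ?M)"
    using card_Un_le[of Low_R ?M] by linarith
  ultimately show ?thesis using mix by (simp add: distrib_right)
qed

lemma sum_le_if_low_majority:
  fixes R B :: "nat \<Rightarrow> real" and lp mu :: real and n :: nat
  defines "Low_B \<equiv> {c\<in>{..<n}. B c \<le> lp * real n}" and "Low_R \<equiv> {c\<in>{..<n}. R c \<le> lp * real n}"
  assumes RB: "\<And>c. c < n \<Longrightarrow> R c + B c = real n - 1" and Rn: "\<And>c. c < n \<Longrightarrow> R c \<ge> 0"
    and lp: "lp \<ge> 0" and n1: "n \<ge> 1"
    and ge: "card Low_R \<le> card Low_B"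
    and prod: "real (card Low_B) * real (card Low_R) \<le> lp * real n * real n"
    and mix: "real (card ({..<n} - Low_B - Low_R)) \<le> mu * real n"
    and mu: "mu \<le> 1/2"
  shows "(\<Sum>c<n. B c) \<le> (5 * lp + mu) * (real n)^2"
proof -
  have sub: "Low_B \<subseteq> {..<n}" by (auto simp: Low_B_def)
  have "(\<Sum>c<n. B c) = (\<Sum>c\<in>Low_B. B c) + (\<Sum>c\<in>{..<n} - Low_B. B c)"
    using sum.subset_diff[OF sub, of B] by (simp add: add.commute)
  also have "\<dots> \<le> (\<Sum>c\<in>Low_B. lp * real n) + (\<Sum>c\<in>{..<n} - Low_B. real n)"
    using RB Rn by (intro add_mono sum_mono) (force simp: Low_B_def)+
  also have "\<dots> = real (card Low_B) * (lp * real n) + real (card ({..<n} - Low_B)) * real n"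
    by simp
  also have "\<dots> \<le> real n * (lp * real n) + ((4 * lp + mu) * real n) * real n"
    using card_mono[OF _ sub] lp card_not_low_le[OF lp n1 ge[unfolded Low_B_def Low_R_def]
        prod[unfolded Low_B_def Low_R_def] mix[unfolded Low_B_def Low_R_def] mu]
    by (intro add_mono mult_right_mono) (auto simp: Low_B_def Low_R_def)
  also have "\<dots> = (5 * lp + mu) * (real n)^2" by (simp add: power2_eq_square algebra_simps)
  finally show ?thesis .
qed

lemma sum_indicator_neq_classes:
  fixes x :: "'a \<Rightarrow> 'b"
  assumes W: "finite W" and V: "finite V" "x ` W \<subseteq> V"
  shows "(\<Sum>c\<in>W. \<Sum>e\<in>W-{c}. if x c \<noteq> x e then 1 else 0)
       = real (card W)^2 - (\<Sum>v\<in>V. real (card {c\<in>W. x c = v})^2)"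
proof -
  have "(\<Sum>c\<in>W. \<Sum>e\<in>W-{c}. if x c \<noteq> x e then 1 else 0) = (\<Sum>c\<in>W. \<Sum>e\<in>W. if x c \<noteq> x e then 1 else (0::real))"
    using W by (intro sum.cong[OF refl]) (simp add: sum_diff1)
  also have "\<dots> = (\<Sum>c\<in>W. \<Sum>e\<in>W. 1 - (if x e = x c then 1 else (0::real)))"
    by (intro sum.cong refl) auto
  also have "\<dots> = real (card W)^2 - (\<Sum>c\<in>W. real (card {e\<in>W. x e = x c}))"
    using W by (simp add: sum_subtractf sum_indicator_eq_card power2_eq_square)
  also have "(\<Sum>c\<in>W. real (card {e\<in>W. x e = x c})) = (\<Sum>v\<in>V. \<Sum>c\<in>{c\<in>W. x c = v}. real (card {e\<in>W. x e = x c}))"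
    using W V by (intro sum.group[symmetric]) auto
  also have "\<dots> = (\<Sum>v\<in>V. real (card {c\<in>W. x c = v})^2)"
  proof (rule sum.cong[OF refl])
    fix v
    have "(\<Sum>c\<in>{c\<in>W. x c = v}. real (card {e\<in>W. x e = x c})) = (\<Sum>c\<in>{c\<in>W. x c = v}. real (card {e\<in>W. x e = v}))"
      by (intro sum.cong) auto
    then show "(\<Sum>c\<in>{c\<in>W. x c = v}. real (card {e\<in>W. x e = x c})) = real (card {c\<in>W. x c = v})^2"
      by (simp add: power2_eq_square)
  qed
  finally show ?thesis .
qed

definition few_blue :: "nat \<Rightarrow> (nat set \<Rightarrow> int) \<Rightarrow> real \<Rightarrow> nat set" where
  "few_blue n f t = {c\<in>{..<n}. blue_degree n f c \<le> t}"

definition few_red :: "nat \<Rightarrow> (nat set \<Rightarrow> int) \<Rightarrow> real \<Rightarrow> nat set" where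
  "few_red n f t = {c\<in>{..<n}. red_degree n f c \<le> t}"

locale two_colouring =
  fixes n :: nat and f :: "nat set \<Rightarrow> int"
  assumes pm1: "\<forall>e\<in>Kn_edges n. f e = 1 \<or> f e = -1"
begin

lemma f_edge_pm1: "a < n \<Longrightarrow> c < n \<Longrightarrow> a \<noteq> c \<Longrightarrow> f {a, c} = 1 \<or> f {a, c} = -1"
  using pm1 by (auto simp: Kn_edges_def card_insert_if)

lemma colour_gap_cases:
  assumes "a < n" "b < n" "c < n" "c \<noteq> a" "c \<noteq> b"
  shows "colour_gap f a b c = 0 \<or> colour_gap f a b c = 2 \<or> colour_gap f a b c = -2"
  using f_edge_pm1[of a c] f_edge_pm1[of b c] assms by (auto simp: colour_gap_def colour_def)

lemma sum_gap_counts: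
  assumes ab: "a < n" "b < n"
  shows "gap_count n f a b 0 + gap_count n f a b 2 + gap_count n f a b (-2) = real (card ({..<n} - {a} - {b}))"
proof -
  define W where "W = {..<n} - {a} - {b}"
  define Z where "Z = {c\<in>W. colour_gap f a b c = 0}"
  define P where "P = {c\<in>W. colour_gap f a b c = 2}"
  define M where "M = {c\<in>W. colour_gap f a b c = -2}"
  have fW: "finite W" by (simp add: W_def)
  have W3: "W = Z \<union> P \<union> M" using colour_gap_cases ab unfolding W_def Z_def P_def M_def by auto
  have d1: "Z \<inter> P = {}" "(Z \<union> P) \<inter> M = {}" unfolding Z_def P_def M_def by auto
  have fs: "finite Z" "finite P" "finite M" using fW unfolding Z_def P_def M_def by auto
  have "card W = card Z + card P + card M"
    unfolding W3 using d1 fs by (simp add: card_Un_disjoint)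
  moreover have "gap_count n f a b 0 = real (card Z)" "gap_count n f a b 2 = real (card P)" "gap_count n f a b (-2) = real (card M)"
    unfolding gap_count_def Z_def P_def M_def W_def by simp_all
  ultimately show ?thesis unfolding W_def by simp
qed

lemma count_gap_changes:
  assumes ab: "a < n" "b < n"
  shows "(\<Sum>c\<in>{..<n}-{a}-{b}. \<Sum>e\<in>{..<n}-{a}-{b}-{c}. if colour_gap f a b c \<noteq> colour_gap f a b e then 1 else 0)
       = 2 * gap_pairs n f a b"
proof -
  let ?W = "{..<n}-{a}-{b}" and ?x = "colour_gap f a b"
  have "?x ` ?W \<subseteq> {0, 2, -2}" using colour_gap_cases ab by auto
  then have "(\<Sum>c\<in>?W. \<Sum>e\<in>?W-{c}. if ?x c \<noteq> ?x e then 1 else 0)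
      = real (card ?W)^2 - (\<Sum>v\<in>{0, 2, -2}. real (card {c\<in>?W. ?x c = v})^2)"
    by (intro sum_indicator_neq_classes) auto
  also have "real (card ?W) = gap_count n f a b 0 + gap_count n f a b 2 + gap_count n f a b (-2)"
    using sum_gap_counts[OF ab] by simp
  also have "(\<Sum>v\<in>{0, 2, -2}. real (card {c\<in>?W. ?x c = v})^2)
      = (gap_count n f a b 0)^2 + (gap_count n f a b 2)^2 + (gap_count n f a b (-2))^2"
    by (simp add: gap_count_def)
  finally show ?thesis by (simp add: gap_pairs_def power2_eq_square algebra_simps)
qed

lemma red_plus_blue_degree: "c < n \<Longrightarrow> red_degree n f c + blue_degree n f c = real n - 1"
proof -
  assume c: "c < n"
  have "{a\<in>{..<n}. a \<noteq> c} = {a\<in>{..<n}. a \<noteq> c \<and> f {a, c} = 1} \<union> {a\<in>{..<n}. a \<noteq> c \<and> f {a, c} = -1}"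
    using f_edge_pm1 c by auto
  moreover have "card ({a\<in>{..<n}. a \<noteq> c \<and> f {a, c} = 1} \<union> {a\<in>{..<n}. a \<noteq> c \<and> f {a, c} = -1})
      = card {a\<in>{..<n}. a \<noteq> c \<and> f {a, c} = 1} + card {a\<in>{..<n}. a \<noteq> c \<and> f {a, c} = -1}"
    by (rule card_Un_disjoint) auto
  moreover have "{a\<in>{..<n}. a \<noteq> c} = {..<n} - {c}" by auto
  ultimately show ?thesis using c by (simp add: red_degree_def blue_degree_def)
qed

lemma cross_count_colour_eq: "cross_count n (colour f) = (\<Sum>a<n. \<Sum>b\<in>{..<n}-{a}. 2 * gap_pairs n f a b)"
  unfolding cross_count_expand colour_gap_def[symmetric]
  by (intro sum.cong refl) (simp add: count_gap_changes)

lemma gap_count_2_eq: "a < n \<Longrightarrow> b < n \<Longrightarrow> gap_count n f a b 2 = (\<Sum>c<n. if c \<noteq> a \<and> c \<noteq> b \<and> f {a,c} = 1 \<and> f {b,c} = -1 then 1 else 0)"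
proof -
  assume ab: "a < n" "b < n"
  have "{c\<in>{..<n} - {a} - {b}. colour_gap f a b c = 2} = {c\<in>{..<n}. c \<noteq> a \<and> c \<noteq> b \<and> f {a,c} = 1 \<and> f {b,c} = -1}"
  proof (rule set_eqI)
    fix x
    show "x \<in> {c\<in>{..<n} - {a} - {b}. colour_gap f a b c = 2} \<longleftrightarrow> x \<in> {c\<in>{..<n}. c \<noteq> a \<and> c \<noteq> b \<and> f {a,c} = 1 \<and> f {b,c} = -1}"
    proof (cases "x < n \<and> x \<noteq> a \<and> x \<noteq> b")
      case True
      then have "f {a,x} = 1 \<or> f {a,x} = -1" "f {b,x} = 1 \<or> f {b,x} = -1" using f_edge_pm1 ab by auto
      then show ?thesis using True by (auto simp: colour_gap_def colour_def)
    next
      case False then show ?thesis by auto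
    qed
  qed
  then show ?thesis unfolding gap_count_def by (simp add: sum_indicator_eq_card)
qed

lemma sum_red_times_blue: "(\<Sum>c<n. red_degree n f c * blue_degree n f c) = (\<Sum>a<n. \<Sum>b\<in>{..<n}-{a}. gap_count n f a b 2)"
proof -
  let ?I = "\<lambda>a b c. if c \<noteq> a \<and> c \<noteq> b \<and> f {a,c} = 1 \<and> f {b,c} = -1 then 1 else (0::real)"
  have "(\<Sum>a<n. \<Sum>b\<in>{..<n}-{a}. gap_count n f a b 2) = (\<Sum>a<n. \<Sum>b\<in>{..<n}-{a}. \<Sum>c<n. ?I a b c)"
    by (rule sum.cong[OF refl], rule sum.cong[OF refl]) (simp add: gap_count_2_eq)
  also have "\<dots> = (\<Sum>a<n. \<Sum>b<n. \<Sum>c<n. ?I a b c)"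
  proof (rule sum.cong[OF refl])
    fix a assume a: "a \<in> {..<n}"
    have "(\<Sum>b\<in>{..<n}-{a}. \<Sum>c<n. ?I a b c) = (\<Sum>b<n. \<Sum>c<n. ?I a b c) - (\<Sum>c<n. ?I a a c)"
      using a by (simp add: sum_diff1)
    moreover have "(\<Sum>c<n. ?I a a c) = 0" by (rule sum.neutral) auto
    ultimately show "(\<Sum>b\<in>{..<n}-{a}. \<Sum>c<n. ?I a b c) = (\<Sum>b<n. \<Sum>c<n. ?I a b c)" by simp
  qed
  also have "\<dots> = (\<Sum>c<n. \<Sum>a<n. \<Sum>b<n. ?I a b c)"
    by (rule sum_rotate3)
  also have "\<dots> = (\<Sum>c<n. red_degree n f c * blue_degree n f c)"
  proof (rule sum.cong[OF refl])
    fix c assume c: "c \<in> {..<n}"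
    have "(\<Sum>a<n. \<Sum>b<n. ?I a b c) = (\<Sum>a<n. \<Sum>b<n. (if a \<noteq> c \<and> f {a,c} = 1 then 1 else 0) * (if b \<noteq> c \<and> f {b,c} = -1 then 1 else (0::real)))"
      by (intro sum.cong refl) auto
    also have "\<dots> = (\<Sum>a<n. if a \<noteq> c \<and> f {a,c} = 1 then 1 else (0::real)) * (\<Sum>b<n. if b \<noteq> c \<and> f {b,c} = -1 then 1 else (0::real))"
      by (simp add: sum_product)
    also have "\<dots> = red_degree n f c * blue_degree n f c"
      unfolding red_degree_def blue_degree_def by (simp add: sum_indicator_eq_card)
    finally show "(\<Sum>a<n. \<Sum>b<n. ?I a b c) = red_degree n f c * blue_degree n f c" .
  qed
  finally show ?thesis by simp
qed

lemma blue_degree_le: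
  assumes ab: "a < n" "b < n" "a \<noteq> b"
  shows "blue_degree n f a \<le> gap_count n f a b 0 + gap_count n f a b (-2) + 1"
proof -
  define W where "W = {..<n} - {a} - {b}"
  define Z where "Z = {c\<in>W. colour_gap f a b c = 0}"
  define M where "M = {c\<in>W. colour_gap f a b c = -2}"
  have sub: "{c\<in>{..<n}. c \<noteq> a \<and> f {c, a} = -1} \<subseteq> insert b (Z \<union> M)"
  proof
    fix c assume c: "c \<in> {c\<in>{..<n}. c \<noteq> a \<and> f {c, a} = -1}"
    show "c \<in> insert b (Z \<union> M)"
    proof (cases "c = b")
      case False
      then have "f {b,c} = 1 \<or> f {b,c} = -1" using f_edge_pm1[of b c] c ab by auto
      moreover have "f {a,c} = -1" using c by (simp add: insert_commute)
      ultimately show ?thesis using c False unfolding Z_def M_def W_def by (auto simp: colour_gap_def colour_def)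
    qed simp
  qed
  have fZM: "finite (Z \<union> M)" by (simp add: Z_def M_def W_def)
  have "card {c\<in>{..<n}. c \<noteq> a \<and> f {c, a} = -1} \<le> card (insert b (Z \<union> M))"
    by (rule card_mono[OF _ sub]) (use fZM in simp)
  also have "\<dots> \<le> card (Z \<union> M) + 1" using fZM by (simp add: card_insert_if)
  also have "\<dots> \<le> card Z + card M + 1" using card_Un_le[of Z M] by simp
  finally have "real (card {c\<in>{..<n}. c \<noteq> a \<and> f {c, a} = -1}) \<le> real (card Z) + real (card M) + 1"
    by linarith
  then show ?thesis unfolding blue_degree_def gap_count_def Z_def M_def W_def .
qed

lemma red_degree_le:
  assumes ab: "a < n" "b < n" "a \<noteq> b"
  shows "red_degree n f b \<le> gap_count n f a b 0 + gap_count n f a b (-2) + 1"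
proof -
  define W where "W = {..<n} - {a} - {b}"
  define Z where "Z = {c\<in>W. colour_gap f a b c = 0}"
  define M where "M = {c\<in>W. colour_gap f a b c = -2}"
  have sub: "{c\<in>{..<n}. c \<noteq> b \<and> f {c, b} = 1} \<subseteq> insert a (Z \<union> M)"
  proof
    fix c assume c: "c \<in> {c\<in>{..<n}. c \<noteq> b \<and> f {c, b} = 1}"
    show "c \<in> insert a (Z \<union> M)"
    proof (cases "c = a")
      case False
      then have "f {a,c} = 1 \<or> f {a,c} = -1" using f_edge_pm1[of a c] c ab by auto
      moreover have "f {b,c} = 1" using c by (simp add: insert_commute)
      ultimately show ?thesis using c False unfolding Z_def M_def W_def by (auto simp: colour_gap_def colour_def)
    qed simp
  qed
  have fZM: "finite (Z \<union> M)" by (simp add: Z_def M_def W_def)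
  have "card {c\<in>{..<n}. c \<noteq> b \<and> f {c, b} = 1} \<le> card (insert a (Z \<union> M))"
    by (rule card_mono[OF _ sub]) (use fZM in simp)
  also have "\<dots> \<le> card (Z \<union> M) + 1" using fZM by (simp add: card_insert_if)
  also have "\<dots> \<le> card Z + card M + 1" using card_Un_le[of Z M] by simp
  finally have "real (card {c\<in>{..<n}. c \<noteq> b \<and> f {c, b} = 1}) \<le> real (card Z) + real (card M) + 1"
    by linarith
  then show ?thesis unfolding red_degree_def gap_count_def Z_def M_def W_def .
qed

lemma ZPM_nonneg: "gap_count n f a b 0 \<ge> 0" "gap_count n f a b 2 \<ge> 0" "gap_count n f a b (-2) \<ge> 0"
  by (simp_all add: gap_count_def)

lemma gap_pairs_nonneg: "gap_pairs n f a b \<ge> 0"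
  using ZPM_nonneg[of a b] by (simp add: gap_pairs_def)

text \<open>With P the gap-2 class and Z, M the others, P (n - 2) or (Z + M) (n - 2) is at most 2 gap_pairs;
  in the second case either gap_pairs exceeds \<theta>, or Z + M is so small that a has few blue and b
  few red neighbours.\<close>
lemma gap_count_2_le:
  assumes ab: "a < n" "b < n" "a \<noteq> b" and n3: "3 \<le> n" and th: "\<theta> > 0"
    and t0: "2 * \<theta> / (real n - 2) + 1 \<le> t0"
  shows "gap_count n f a b 2 \<le> 2 * gap_pairs n f a b / (real n - 2) + (real n - 2) * gap_pairs n f a b / \<theta>
           + (if blue_degree n f a \<le> t0 \<and> red_degree n f b \<le> t0 then real n - 2 else 0)"
proof -
  define m where "m = real n - 2"
  have m0: "m > 0" using n3 by (simp add: m_def)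
  let ?Z = "gap_count n f a b 0" and ?P = "gap_count n f a b 2" and ?M = "gap_count n f a b (-2)" and ?t = "gap_pairs n f a b"
  have cW: "card ({..<n} - {a} - {b}) = n - 2" using ab by (simp add: card_Diff_singleton_if)
  have sum3: "?Z + ?P + ?M = m" using sum_gap_counts[OF ab(1,2)] cW n3 by (simp add: m_def)
  have nn: "?Z \<ge> 0" "?P \<ge> 0" "?M \<ge> 0" "?t \<ge> 0" using ZPM_nonneg gap_pairs_nonneg by auto
  have Pm: "?P \<le> m" using sum3 nn by linarith
  have t1: "0 \<le> m * ?t / \<theta>" using m0 nn th by simp
  have t2: "0 \<le> 2 * ?t / m" using m0 nn by simp
  have ind0: "0 \<le> (if blue_degree n f a \<le> t0 \<and> red_degree n f b \<le> t0 then m else 0)" using m0 by simp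
  from le_pair_products[OF nn(1-3) sum3 m0]
  have "?P \<le> 2 * ?t / m + m * ?t / \<theta> + (if blue_degree n f a \<le> t0 \<and> red_degree n f b \<le> t0 then m else 0)"
  proof
    assume "?P * m \<le> 2 * (?Z * ?P + ?Z * ?M + ?P * ?M)"
    then have "?P \<le> 2 * ?t / m" using m0 by (simp add: gap_pairs_def pos_le_divide_eq)
    then show ?thesis using t1 ind0 by linarith
  next
    assume zm: "(?Z + ?M) * m \<le> 2 * (?Z * ?P + ?Z * ?M + ?P * ?M)"
    show ?thesis
    proof (cases "?t > \<theta>")
      case True
      then have "m \<le> m * ?t / \<theta>" using th m0 by (simp add: pos_le_divide_eq)
      then show ?thesis using Pm t2 ind0 by linarith
    next
      case False
      then have "(?Z + ?M) * m \<le> 2 * \<theta>" using zm by (simp add: gap_pairs_def)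
      then have "?Z + ?M \<le> 2 * \<theta> / m" using m0 by (simp add: pos_le_divide_eq)
      then have "blue_degree n f a \<le> t0" "red_degree n f b \<le> t0"
        using blue_degree_le[OF ab] red_degree_le[OF ab] t0 unfolding m_def by linarith+
      then show ?thesis using Pm t1 t2 by simp
    qed
  qed
  then show ?thesis unfolding m_def .
qed

lemma card_times_card_le_sum_degrees:
  assumes V: "V \<subseteq> {..<n}" and W: "W \<subseteq> {..<n}" and disj: "V \<inter> W = {}"
  shows "real (card V) * real (card W) \<le> (\<Sum>w\<in>W. red_degree n f w) + (\<Sum>v\<in>V. blue_degree n f v)"
proof -
  have fin: "finite V" "finite W" using V W finite_subset by blast+
  have "1 \<le> (if f {w, v} = 1 then 1 else 0) + (if f {v, w} = -1 then 1 else (0::real))" if "v \<in> V" "w \<in> W" for v w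
    using that V W disj f_edge_pm1[of v w] by (auto simp: insert_commute)
  then have "(\<Sum>v\<in>V. \<Sum>w\<in>W. 1)
      \<le> (\<Sum>v\<in>V. \<Sum>w\<in>W. (if f {w, v} = 1 then 1 else 0) + (if f {v, w} = -1 then 1 else (0::real)))"
    by (intro sum_mono) auto
  also have "\<dots> = (\<Sum>w\<in>W. \<Sum>v\<in>V. if f {w, v} = 1 then 1 else 0) + (\<Sum>v\<in>V. \<Sum>w\<in>W. if f {v, w} = -1 then 1 else 0)"
    by (simp only: sum.distrib sum.swap[of _ V W])
  also have "\<dots> = (\<Sum>w\<in>W. real (card {v\<in>V. f {w, v} = 1})) + (\<Sum>v\<in>V. real (card {w\<in>W. f {v, w} = -1}))"
    using fin by (simp add: sum_indicator_eq_card)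
  also have "\<dots> \<le> (\<Sum>w\<in>W. red_degree n f w) + (\<Sum>v\<in>V. blue_degree n f v)"
    unfolding red_degree_def blue_degree_def using V W disj
    by (intro add_mono sum_mono of_nat_mono card_mono) (auto simp: insert_commute)
  finally show ?thesis by simp
qed

text \<open>Every edge between a vertex with few blue and one with few red neighbours counts against one of them.\<close>
lemma card_few_blue_times_few_red_le:
  assumes t: "2 * t < real n - 1" "0 \<le> t"
  shows "real (card (few_blue n f t)) * real (card (few_red n f t)) \<le> t * real n"
proof -
  have disj: "few_blue n f t \<inter> few_red n f t = {}"
    using red_plus_blue_degree t by (force simp: few_blue_def few_red_def)
  have "real (card (few_blue n f t)) * real (card (few_red n f t))
      \<le> (\<Sum>w\<in>few_red n f t. red_degree n f w) + (\<Sum>v\<in>few_blue n f t. blue_degree n f v)"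
    using disj by (intro card_times_card_le_sum_degrees) (auto simp: few_blue_def few_red_def)
  also have "\<dots> \<le> t * real (card (few_red n f t)) + t * real (card (few_blue n f t))"
    using sum_bounded_above[of "few_red n f t" "red_degree n f" t]
      sum_bounded_above[of "few_blue n f t" "blue_degree n f" t]
    by (simp add: few_blue_def few_red_def mult.commute)
  also have "\<dots> = t * real (card (few_blue n f t \<union> few_red n f t))"
    using disj by (simp add: card_Un_disjoint few_blue_def few_red_def algebra_simps)
  also have "\<dots> \<le> t * real n"
    using t by (intro mult_left_mono) (auto intro: card_mono[of "{..<n}", simplified] simp: few_blue_def few_red_def)
  finally show ?thesis .
qed

lemma colour_sum_eq_red_minus_blue: "2 * colour_sum n f = (\<Sum>a<n. red_degree n f a - blue_degree n f a)"
proof -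
  have "2 * colour_sum n f = (\<Sum>a\<in>{..<n}. \<Sum>b\<in>{..<n}-{a}. real_of_int (f {a,b}))"
    using sum_ordered_pairs_Kn_edges[of "\<lambda>e. real_of_int (f e)" n] by (simp add: colour_sum_def)
  also have "\<dots> = (\<Sum>a<n. red_degree n f a - blue_degree n f a)"
  proof (rule sum.cong[OF refl])
    fix a assume a: "a \<in> {..<n}"
    have "(\<Sum>b\<in>{..<n}-{a}. real_of_int (f {a,b})) = (\<Sum>b\<in>{..<n}-{a}. (if f {b,a} = 1 then 1 else 0) - (if f {b,a} = -1 then 1 else (0::real)))"
    proof (rule sum.cong[OF refl])
      fix b assume "b \<in> {..<n} - {a}"
      then have "f {a,b} = 1 \<or> f {a,b} = -1" using f_edge_pm1[of a b] a by auto
      then show "real_of_int (f {a,b}) = (if f {b,a} = 1 then 1 else 0) - (if f {b,a} = -1 then 1 else (0::real))"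
        by (auto simp: insert_commute)
    qed
    also have "\<dots> = real (card {b\<in>{..<n}-{a}. f {b,a} = 1}) - real (card {b\<in>{..<n}-{a}. f {b,a} = -1})"
      by (simp add: sum_subtractf sum_indicator_eq_card)
    also have "{b\<in>{..<n}-{a}. f {b,a} = 1} = {b\<in>{..<n}. b \<noteq> a \<and> f {b,a} = 1}" by auto
    also have "{b\<in>{..<n}-{a}. f {b,a} = -1} = {b\<in>{..<n}. b \<noteq> a \<and> f {b,a} = -1}" by auto
    finally show "(\<Sum>b\<in>{..<n}-{a}. real_of_int (f {a,b})) = red_degree n f a - blue_degree n f a" by (simp add: red_degree_def blue_degree_def)
  qed
  finally show ?thesis .
qed

lemma red_blue_degree_nonneg: "red_degree n f c \<ge> 0" "blue_degree n f c \<ge> 0" by (simp_all add: red_degree_def blue_degree_def)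

lemma sum_indicator_product:
  assumes "X \<subseteq> {..<n}" "Y \<subseteq> {..<n}"
  shows "(\<Sum>a<n. \<Sum>b<n. if a \<in> X \<and> b \<in> Y then c else 0) = c * (real (card X) * real (card Y))"
proof -
  have "(\<Sum>a<n. \<Sum>b<n. if a \<in> X \<and> b \<in> Y then c else 0)
      = (\<Sum>a<n. \<Sum>b<n. c * ((if a \<in> X then 1 else 0) * (if b \<in> Y then 1 else (0::real))))"
    by (intro sum.cong refl) simp
  also have "\<dots> = c * ((\<Sum>a<n. if a \<in> X then 1 else 0) * (\<Sum>b<n. if b \<in> Y then 1 else (0::real)))"
    by (simp only: sum_distrib_left[symmetric] sum_product)
  also have "\<dots> = c * (real (card X) * real (card Y))"
  proof -
    have "{a. a < n \<and> a \<in> X} = X" "{b. b < n \<and> b \<in> Y} = Y" using assms by auto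
    then show ?thesis by (simp add: sum_indicator_eq_card)
  qed
  finally show ?thesis .
qed

lemma sum_gap_count_2_le:
  assumes n3: "3 \<le> n" and \<theta>: "\<theta> > 0" and t: "2 * \<theta> / (real n - 2) + 1 \<le> t" "2 * t < real n - 1"
  shows "(\<Sum>a<n. \<Sum>b\<in>{..<n}-{a}. gap_count n f a b 2)
       \<le> (2 / (real n - 2) + (real n - 2) / \<theta>) * (cross_count n (colour f) / 2) + (real n - 2) * (t * real n)"
proof -
  let ?X = "few_blue n f t" and ?Y = "few_red n f t" and ?K = "2 / (real n - 2) + (real n - 2) / \<theta>"
  let ?ind = "\<lambda>a b. if a \<in> ?X \<and> b \<in> ?Y then real n - 2 else 0"
  have "gap_count n f a b 2 \<le> ?K * gap_pairs n f a b + ?ind a b" if "a < n" "b \<in> {..<n} - {a}" for a b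
    using gap_count_2_le[OF _ _ _ n3 \<theta> t(1), of a b] that by (simp add: few_blue_def few_red_def distrib_right)
  then have "(\<Sum>a<n. \<Sum>b\<in>{..<n}-{a}. gap_count n f a b 2)
      \<le> (\<Sum>a<n. \<Sum>b\<in>{..<n}-{a}. ?K * gap_pairs n f a b) + (\<Sum>a<n. \<Sum>b\<in>{..<n}-{a}. ?ind a b)"
    by (simp only: sum.distrib[symmetric]) (intro sum_mono, auto)
  also have "(\<Sum>a<n. \<Sum>b\<in>{..<n}-{a}. ?K * gap_pairs n f a b) = ?K * (cross_count n (colour f) / 2)"
    using cross_count_colour_eq by (simp add: sum_distrib_left[symmetric])
  also have "(\<Sum>a<n. \<Sum>b\<in>{..<n}-{a}. ?ind a b) \<le> (\<Sum>a<n. \<Sum>b<n. ?ind a b)"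
    using n3 by (intro sum_mono sum_mono2) auto
  also have "\<dots> = (real n - 2) * (real (card ?X) * real (card ?Y))"
    by (rule sum_indicator_product) (auto simp: few_blue_def few_red_def)
  also have "\<dots> \<le> (real n - 2) * (t * real n)"
  proof -
    have "0 \<le> 2 * \<theta> / (real n - 2)" using \<theta> n3 by simp
    then show ?thesis
      using card_few_blue_times_few_red_le[OF t(2)] n3 t(1) by (intro mult_left_mono) auto
  qed
  finally show ?thesis by simp
qed

text \<open>The left side counts triples (a, b, c) with ac red and bc blue; by gap_count_2_le almost all of
  them lie in many alternating 4-tuples.\<close>
lemma sum_red_times_blue_le:
  fixes lam eta :: real
  assumes n4: "4 \<le> n" and lam: "lam > 0" "lam * real n \<ge> 2" "2 * (lam * real n) < real n - 1"
    and T: "cross_count n (colour f) \<le> eta * real n ^ 4" and eta: "eta \<ge> 0"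
  shows "(\<Sum>c<n. red_degree n f c * blue_degree n f c) \<le> (2 * eta + 2 * eta / lam + lam) * real n ^ 3"
proof -
  define m where "m = real n - 2"
  define \<theta> where "\<theta> = (lam * real n - 1) * m / 2"
  have m: "real n / 2 \<le> m" "m \<le> real n" "m > 0" using n4 by (auto simp: m_def)
  have \<theta>: "\<theta> > 0" using lam m by (simp add: \<theta>_def)
  have t: "2 * \<theta> / (real n - 2) + 1 \<le> lam * real n"
    using m by (simp add: \<theta>_def m_def)
  have "(\<Sum>c<n. red_degree n f c * blue_degree n f c)
      \<le> (2 / m + m / \<theta>) * (cross_count n (colour f) / 2) + m * (lam * real n * real n)"
    unfolding sum_red_times_blue m_def by (rule sum_gap_count_2_le[OF _ \<theta> t lam(3)]) (use n4 in auto)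
  also have "(2 / m + m / \<theta>) * (cross_count n (colour f) / 2)
      \<le> (4 / real n + 4 / (lam * real n)) * (eta * real n ^ 4 / 2)"
  proof (rule mult_mono)
    show "2 / m + m / \<theta> \<le> 4 / real n + 4 / (lam * real n)"
      using m lam by (intro add_mono) (auto simp: \<theta>_def frac_le divide_simps)
  qed (use T m \<theta> cross_count_nonneg lam n4 in auto)
  also have "\<dots> = (2 * eta + 2 * eta / lam) * real n ^ 3"
    using n4 lam by (simp add: field_simps power_def)
  also have "m * (lam * real n * real n) \<le> lam * real n ^ 3"
    using m lam by (simp add: power3_eq_cube mult_right_mono)
  finally show ?thesis by (simp add: distrib_right)
qed

lemma red_times_blue_ge:
  assumes c: "c < n" and t: "0 \<le> t" "t < red_degree n f c" "t < blue_degree n f c"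
  shows "t * ((real n - 1) / 2) \<le> red_degree n f c * blue_degree n f c"
proof (cases "(real n - 1) / 2 \<le> red_degree n f c")
  case True
  then show ?thesis using c t mult_mono[of t "blue_degree n f c" "(real n - 1) / 2" "red_degree n f c"]
    by (simp add: mult.commute)
next
  case False
  then have "(real n - 1) / 2 \<le> blue_degree n f c" using red_plus_blue_degree[OF c] by simp
  then show ?thesis using c t mult_mono[of t "red_degree n f c" "(real n - 1) / 2" "blue_degree n f c"]
    by simp
qed

lemma card_mixed_le:
  fixes lp kap :: real
  assumes n2: "2 \<le> n" and lp: "lp > 0"
    and A: "(\<Sum>c<n. red_degree n f c * blue_degree n f c) \<le> kap * real n ^ 3"
  shows "real (card ({..<n} - few_blue n f (lp * real n) - few_red n f (lp * real n))) \<le> (4 * kap / lp) * real n"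
proof -
  define Mix where "Mix = {..<n} - few_blue n f (lp * real n) - few_red n f (lp * real n)"
  have "lp * real n * (real n / 4) \<le> lp * real n * ((real n - 1) / 2)"
    using n2 lp by (intro mult_left_mono) auto
  then have "real (card Mix) * (lp * real n * (real n / 4)) \<le> real (card Mix) * (lp * real n * ((real n - 1) / 2))"
    by (rule mult_left_mono) simp
  also have "\<dots> = (\<Sum>c\<in>Mix. lp * real n * ((real n - 1) / 2))"
    by simp
  also have "\<dots> \<le> (\<Sum>c\<in>Mix. red_degree n f c * blue_degree n f c)"
    using lp by (intro sum_mono red_times_blue_ge) (auto simp: Mix_def few_blue_def few_red_def)
  also have "\<dots> \<le> (\<Sum>c<n. red_degree n f c * blue_degree n f c)"
    by (rule sum_mono2) (auto simp: Mix_def red_blue_degree_nonneg)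
  also have "\<dots> \<le> (4 * kap / lp * real n) * (lp * real n * (real n / 4))"
    using A lp by (simp add: field_simps power3_eq_cube)
  finally show ?thesis
    unfolding Mix_def[symmetric] by (rule mult_right_le_imp_le) (use lp n2 in simp)
qed

lemma abs_colour_sum_ge:
  assumes "(\<Sum>c<n. blue_degree n f c) \<le> real n * (real n - 1) / 4 \<or> (\<Sum>c<n. red_degree n f c) \<le> real n * (real n - 1) / 4"
  shows "real n * (real n - 1) / 4 \<le> \<bar>colour_sum n f\<bar>"
proof -
  have "(\<Sum>c<n. red_degree n f c) + (\<Sum>c<n. blue_degree n f c) = real n * (real n - 1)"
    using red_plus_blue_degree by (simp add: sum.distrib[symmetric])
  then show ?thesis using assms colour_sum_eq_red_minus_blue by (simp add: sum_subtractf) linarith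
qed

text \<open>A stability argument: with few alternating 4-tuples, almost every vertex has few blue or few red
  neighbours, the two kinds cannot both be numerous, and so one colour has small total degree.\<close>
lemma cross_count_colour_ge:
  assumes n: "20480 \<le> n" and S: "\<bar>colour_sum n f\<bar> < real n * (real n - 1) / 4"
  shows "cross_count n (colour f) > real n ^ 4 / 10^9"
proof (rule ccontr)
  assume "\<not> cross_count n (colour f) > real n ^ 4 / 10^9"
  then have T: "cross_count n (colour f) \<le> (1 / 10^9) * real n ^ 4" by simp
  define lam :: real where "lam = 1 / 10240"
  define lp :: real where "lp = 1 / 80"
  define kap :: real where "kap = 2 * (1 / 10^9) + 2 * (1 / 10^9) / lam + lam"
  define mu where "mu = 4 * kap / lp"
  have nr: "real n \<ge> 20480" using n by simp
  have "(\<Sum>c<n. red_degree n f c * blue_degree n f c) \<le> kap * real n ^ 3"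
    unfolding kap_def by (rule sum_red_times_blue_le) (use n nr T in \<open>auto simp: lam_def\<close>)
  then have mix: "real (card ({..<n} - few_blue n f (lp * real n) - few_red n f (lp * real n))) \<le> mu * real n"
    unfolding mu_def by (rule card_mixed_le[rotated 2]) (use n in \<open>auto simp: lp_def\<close>)
  have prod: "real (card (few_blue n f (lp * real n))) * real (card (few_red n f (lp * real n))) \<le> lp * real n * real n"
    using card_few_blue_times_few_red_le[of "lp * real n"] nr by (simp add: lp_def)
  have cst: "lp \<ge> 0" "mu \<le> 1/2" "(5 * lp + mu) * (real n)^2 \<le> real n * (real n - 1) / 4"
    using nr by (simp_all add: mu_def kap_def lam_def lp_def power2_eq_square)
  have "(\<Sum>c<n. blue_degree n f c) \<le> (5 * lp + mu) * (real n)^2 \<or> (\<Sum>c<n. red_degree n f c) \<le> (5 * lp + mu) * (real n)^2"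
  proof (cases "card (few_red n f (lp * real n)) \<le> card (few_blue n f (lp * real n))")
    case True
    then show ?thesis
      using sum_le_if_low_majority[where R = "red_degree n f" and B = "blue_degree n f" and lp = lp and mu = mu and n = n] red_plus_blue_degree
        red_blue_degree_nonneg cst prod mix n by (auto simp: few_blue_def few_red_def)
  next
    case False
    have "{..<n} - few_red n f (lp * real n) - few_blue n f (lp * real n) = {..<n} - few_blue n f (lp * real n) - few_red n f (lp * real n)"
      by blast
    then show ?thesis
      using sum_le_if_low_majority[where R = "blue_degree n f" and B = "red_degree n f" and lp = lp and mu = mu and n = n] red_plus_blue_degree
        red_blue_degree_nonneg cst prod mix n False by (auto simp: few_blue_def few_red_def add.commute mult.commute)
  qed
  then show False using abs_colour_sum_ge cst S by fastforce
qed

end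

section \<open>Balanced colourings\<close>

lemma fact_le_power_mult_fact:
  assumes "r \<le> n"
  shows "(fact n :: real) \<le> real n ^ r * fact (n - r)"
proof -
  have "(fact n :: nat) = fact n div fact (n - r) * fact (n - r)"
    by (simp add: fact_dvd)
  also have "\<dots> \<le> n ^ r * fact (n - r)"
    using fact_div_fact_le_pow[OF assms] by simp
  finally have "(fact n :: nat) \<le> n ^ r * fact (n - r)" .
  then show ?thesis by (metis of_nat_fact of_nat_le_iff of_nat_mult of_nat_power)
qed

lemma min_degree_codegree_le:
  assumes "d + 2 \<le> n"
  shows "min (real d) (real n - 1 - real d) * (real n / 4) \<le> real d * (real n - 1 - real d)"
proof (cases "real d \<le> real n - 1 - real d")
  case True
  then have "real n / 4 \<le> real n - 1 - real d" using assms by linarith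
  then show ?thesis using True mult_left_mono[of "real n / 4" "real n - 1 - real d" "real d"] by simp
next
  case False
  then show ?thesis using assms mult_right_mono[of "real n / 4" "real d" "real n - 1 - real d"] by simp
qed

lemma cross_count_adj_ge_min:
  assumes G: "graph_on n F" and R: "regular n F d" and d: "d + 2 \<le> n"
  shows "real n * (real n - 2) * (min (real d) (real n - 1 - real d) * (real n / 4)) \<le> cross_count n (adj F)"
proof -
  have "real n * (real n - 2) * (min (real d) (real n - 1 - real d) * (real n / 4))
      \<le> real n * (real n - 2) * (real d * (real n - 1 - real d))"
    using min_degree_codegree_le[OF d] d by (intro mult_left_mono) auto
  also have "\<dots> \<le> cross_count n (adj F)"
    using cross_count_adj_ge[OF G R] d by (simp add: mult.assoc)
  finally show ?thesis .
qed

lemma exists_copy_balanced_scaled: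
  assumes G: "graph_on n F" and R: "regular n F d"
    and f_pm1: "\<forall>e\<in>Kn_edges n. f e = 1 \<or> f e = -1"
    and n: "20480 \<le> n" and d: "d + 2 \<le> n"
    and balanced: "\<bar>colour_sum n f\<bar> < real n * (real n - 1) / 4"
    and \<mu>: "\<mu> = min (real d) (real n - 1 - real d)" "1 \<le> \<mu>"
    and t: "0 < t" "t^2 = 32 * \<mu>"
  shows "\<exists>H. is_copy n F H \<and> 3 * (real n - 2) * \<mu> / (2048 * 10^9 * t) \<le> real_of_int (discrepancy f H)"
proof -
  define k where "k = n div 4"
  have tt: "32 * real d \<le> t^2 \<or> 32 * (real n - 1 - real d) \<le> t^2"
    unfolding t(2) \<mu>(1) by linarith
  obtain H where H: "is_copy n F H"
    and copy: "3 / (4 * t) * real k * real k * fact (n - 4)^2 * cross_count n (colour f) * cross_count n (adj F)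
     \<le> 2 * fact n ^ 2 * real_of_int (discrepancy f H)"
    using exists_copy_ge_cross_counts[OF G R f_pm1 _ t(1) tt, of k k] by (auto simp: k_def)
  interpret two_colouring n f by unfold_locales (rule f_pm1)
  have "n \<le> 4 * k + 3" unfolding k_def by linarith
  then have "(real n / 8)^2 * (real n ^ 4 / 10^9) * (real n * (real n - 2) * (\<mu> * (real n / 4)))
      \<le> real k ^ 2 * cross_count n (colour f) * cross_count n (adj F)"
    using cross_count_colour_ge[OF n balanced] cross_count_adj_ge_min[OF G R d] n \<mu> cross_count_nonneg
    by (intro mult_mono power_mono) auto
  then have "3 / (4 * t) * fact (n - 4)^2 * ((real n / 8)^2 * (real n ^ 4 / 10^9)
      * (real n * (real n - 2) * (\<mu> * (real n / 4))))
      \<le> 3 / (4 * t) * fact (n - 4)^2 * (real k ^ 2 * cross_count n (colour f) * cross_count n (adj F))"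
    using t(1) by (intro mult_left_mono) auto
  also have "\<dots> \<le> 2 * fact n ^ 2 * real_of_int (discrepancy f H)"
    using copy by (simp add: power2_eq_square ac_simps)
  also have "\<dots> \<le> 2 * (real n ^ 4 * fact (n - 4))^2 * real_of_int (discrepancy f H)"
    using fact_le_power_mult_fact[of 4 n] n
    by (intro mult_right_mono mult_left_mono power_mono) (auto simp: discrepancy_def)
  finally have "(fact (n - 4)^2 * real n ^ 8) * (3 * (real n - 2) * \<mu> / (2048 * 10^9 * t))
      \<le> (fact (n - 4)^2 * real n ^ 8) * real_of_int (discrepancy f H)"
    by (simp add: field_simps eval_nat_numeral)
  then have "3 * (real n - 2) * \<mu> / (2048 * 10^9 * t) \<le> real_of_int (discrepancy f H)"
    by (rule mult_left_le_imp_le) (use n in simp)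
  then show ?thesis using H by blast
qed

lemma exists_copy_balanced:
  assumes G: "graph_on n F" and R: "regular n F d"
    and f_pm1: "\<forall>e\<in>Kn_edges n. f e = 1 \<or> f e = -1"
    and n: "20480 \<le> n" and d: "1 \<le> d" "d + 2 \<le> n"
    and balanced: "\<bar>colour_sum n f\<bar> < real n * (real n - 1) / 4"
  shows "\<exists>H. is_copy n F H \<and>
      sqrt (min (real d) (real n - 1 - real d)) * real n / (8192 * 10^9) \<le> real_of_int (discrepancy f H)"
proof -
  define \<mu> where "\<mu> = min (real d) (real n - 1 - real d)"
  define t where "t = sqrt (32 * \<mu>)"
  have \<mu>: "1 \<le> \<mu>" using d unfolding \<mu>_def by auto
  then have t: "0 < t" "t^2 = 32 * \<mu>" "t \<le> 6 * sqrt \<mu>"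
    using real_sqrt_le_mono[of 32 36] by (auto simp: t_def real_sqrt_mult power_mult_distrib)
  obtain H where H: "is_copy n F H" "3 * (real n - 2) * \<mu> / (2048 * 10^9 * t) \<le> real_of_int (discrepancy f H)"
    using exists_copy_balanced_scaled[OF G R f_pm1 n d(2) balanced \<mu>_def \<mu> t(1,2)] by blast
  have "sqrt \<mu> * real n / (8192 * 10^9) \<le> (real n - 2) * sqrt \<mu> / (4096 * 10^9)"
    using n \<mu> by (simp add: field_simps)
  also have "\<dots> = 3 * (real n - 2) * (\<mu> / sqrt \<mu>) / (2048 * 10^9 * 6)"
    using \<mu> by (simp add: real_div_sqrt)
  also have "\<dots> = 3 * (real n - 2) * \<mu> / (2048 * 10^9 * (6 * sqrt \<mu>))"
    by simp
  also have "\<dots> \<le> 3 * (real n - 2) * \<mu> / (2048 * 10^9 * t)"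
    using t n \<mu> by (intro divide_left_mono mult_left_mono) auto
  also have "\<dots> \<le> real_of_int (discrepancy f H)" by (rule H(2))
  finally show ?thesis using H(1) unfolding \<mu>_def by blast
qed

lemma sqrt_eps_degree_le:
  assumes \<epsilon>: "0 < \<epsilon>" "2 \<le> \<epsilon> * real n" and d_le: "real d \<le> (1 - \<epsilon>) * real n" and d: "d \<noteq> 0"
  shows "sqrt (\<epsilon> * real d) \<le> real d"
    and "sqrt (\<epsilon> * real d) / 2 \<le> sqrt (min (real d) (real n - 1 - real d))"
proof -
  have "\<epsilon> \<le> 1" using d_le d \<epsilon> by (smt (verit) mult_nonpos_nonneg of_nat_0_le_iff of_nat_le_0_iff)
  then have \<epsilon>d: "\<epsilon> * real d \<le> real d" using \<epsilon> by (simp add: mult_left_le_one_le)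
  then show "sqrt (\<epsilon> * real d) \<le> real d"
    using d real_sqrt_le_mono[of "\<epsilon> * real d" "real d ^ 2"] by (simp add: power2_eq_square)
  have d_le': "real d \<le> real n - \<epsilon> * real n" using d_le by (simp add: algebra_simps)
  then have "\<epsilon> * real d \<le> \<epsilon> * real n" using \<epsilon> by (intro mult_left_mono) auto
  moreover have "0 \<le> \<epsilon> * real d" using \<epsilon> by simp
  ultimately have "\<epsilon> * real d / 4 \<le> min (real d) (real n - 1 - real d)"
    using \<epsilon>d d_le' \<epsilon>(2) by simp
  then have "sqrt (\<epsilon> * real d / 4) \<le> sqrt (min (real d) (real n - 1 - real d))"
    by (rule real_sqrt_le_mono)
  then show "sqrt (\<epsilon> * real d) / 2 \<le> sqrt (min (real d) (real n - 1 - real d))"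
    by (simp add: real_sqrt_divide)
qed

lemma exists_copy_discrepancy_ge:
  assumes G: "graph_on n F" and R: "regular n F d"
    and f_pm1: "\<forall>e\<in>Kn_edges n. f e = 1 \<or> f e = -1"
    and \<epsilon>: "0 < \<epsilon>" and n: "20480 \<le> n" "2 \<le> \<epsilon> * real n" and d_le: "real d \<le> (1 - \<epsilon>) * real n"
  shows "\<exists>H. is_copy n F H \<and> sqrt (\<epsilon> * real d) * real n / (16384 * 10^9) \<le> real_of_int (discrepancy f H)"
proof (cases "d = 0")
  case True
  then show ?thesis
    using is_copy_permutes_image[OF permutes_id] by (auto simp: discrepancy_def)
next
  case False
  have dn: "d + 2 \<le> n" using d_le n(2) by (simp add: algebra_simps)
  show ?thesis
  proof (cases "real n * (real n - 1) / 4 \<le> \<bar>colour_sum n f\<bar>")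
    case True
    then obtain H where H: "is_copy n F H" "real d * real n / 4 \<le> real_of_int (discrepancy f H)"
      using exists_copy_unbalanced[OF G R] n by auto
    have "sqrt (\<epsilon> * real d) * real n / (16384 * 10^9) \<le> real d * real n / (16384 * 10^9)"
      using sqrt_eps_degree_le(1)[OF \<epsilon> n(2) d_le False] by (intro divide_right_mono mult_right_mono) simp_all
    also have "\<dots> \<le> real d * real n / 4"
      by (rule divide_left_mono) simp_all
    finally show ?thesis using H by (meson order_trans)
  next
    case False
    obtain H where H: "is_copy n F H"
      "sqrt (min (real d) (real n - 1 - real d)) * real n / (8192 * 10^9) \<le> real_of_int (discrepancy f H)"
      using exists_copy_balanced[OF G R f_pm1 n(1) _ dn] False \<open>d \<noteq> 0\<close> by force
    have "sqrt (\<epsilon> * real d) * real n / (16384 * 10^9) = sqrt (\<epsilon> * real d) / 2 * real n / (8192 * 10^9)"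
      by simp
    also have "\<dots> \<le> sqrt (min (real d) (real n - 1 - real d)) * real n / (8192 * 10^9)"
      using sqrt_eps_degree_le(2)[OF \<epsilon> n(2) d_le \<open>d \<noteq> 0\<close>] by (intro divide_right_mono mult_right_mono) simp_all
    also have "\<dots> \<le> real_of_int (discrepancy f H)" by (rule H(2))
    finally show ?thesis using H(1) by blast
  qed
qed

theorem theorem1p2:
  shows "\<exists>c::real. c > 0 \<and>
    (\<forall>\<epsilon>::real. \<epsilon> > 0 \<longrightarrow>
      (\<exists>n0::nat. \<forall>n\<ge>n0. \<forall>F d.
        graph_on n F \<longrightarrow> regular n F d \<longrightarrow> real d \<le> (1 - \<epsilon>) * real n \<longrightarrow>
        (\<forall>f :: nat set \<Rightarrow> int. (\<forall>e\<in>Kn_edges n. f e = 1 \<or> f e = -1) \<longrightarrow>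
          (\<exists>H. is_copy n F H \<and>
             real_of_int (discrepancy f H) \<ge> c * sqrt (\<epsilon> * real d) * real n))))"
proof (intro exI[of _ "1 / (16384 * 10^9)"] conjI allI impI)
  fix \<epsilon> :: real assume \<epsilon>: "\<epsilon> > 0"
  show "\<exists>n0::nat. \<forall>n\<ge>n0. \<forall>F d.
        graph_on n F \<longrightarrow> regular n F d \<longrightarrow> real d \<le> (1 - \<epsilon>) * real n \<longrightarrow>
        (\<forall>f :: nat set \<Rightarrow> int. (\<forall>e\<in>Kn_edges n. f e = 1 \<or> f e = -1) \<longrightarrow>
          (\<exists>H. is_copy n F H \<and>
             real_of_int (discrepancy f H) \<ge> 1 / (16384 * 10^9) * sqrt (\<epsilon> * real d) * real n))"
  proof (intro exI[of _ "20480 + nat \<lceil>2 / \<epsilon>\<rceil>"] allI impI)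
    fix n d :: nat and F :: "nat set set" and f :: "nat set \<Rightarrow> int"
    assume n: "20480 + nat \<lceil>2 / \<epsilon>\<rceil> \<le> n" and G: "graph_on n F" and R: "regular n F d"
      and d_le: "real d \<le> (1 - \<epsilon>) * real n" and f_pm1: "\<forall>e\<in>Kn_edges n. f e = 1 \<or> f e = -1"
    have "2 / \<epsilon> \<le> real n" using n by linarith
    then have "2 \<le> \<epsilon> * real n" using \<epsilon> by (simp add: field_simps)
    then show "\<exists>H. is_copy n F H \<and>
        real_of_int (discrepancy f H) \<ge> 1 / (16384 * 10^9) * sqrt (\<epsilon> * real d) * real n"
      using exists_copy_discrepancy_ge[OF G R f_pm1 \<epsilon> _ _ d_le] n by simp
  qed
qed (simp)

end
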